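(* For $\mathbf{q}, \mathbf{r}\in(\mathbb{Z}_{\ge0})^{n}$ with $n\ge1$, we have \[\frac{d}{d\sigma}f_{\mathbf{q}}^{\mathbf{r}}(\sigma) = i(i\sigma)^{q_{n}}\left(\mathrm{Li}_{1}(e^{i\sigma})\right)^{r_{n}}f_{\mathbf{q}_{-}}^{\mathbf{r}_{-}}(\sigma).\]
   Context: Notation: $|\mathbf{k}|=k_1+\dots+k_n$, $\mathbf{k}_{-}=(k_1,\dots,k_{n-1})$. $\mathrm{Li}_{\mathbf{k}}(z)=\sum_{0<m_1<\dots<m_n} z^{m_n}/(m_1^{k_1}\cdots m_n^{k_n})$, $\mathrm{Li}_\emptyset=1$; $\sigma\in[0,2\pi]$. Let $B_{\mathbf{q}}=\frac{1}{|\mathbf{q}|+n}B_{\mathbf{q}_-}$, $B_\emptyset=1$; $C_{\mathbf{q}}^{\mathbf{j}}=(-1)^{j_n}\frac{(|\mathbf{q}|-|\mathbf{j}_-|)!}{(|\mathbf{q}|-|\mathbf{j}|)!}C_{\mathbf{q}_-}^{\mathbf{j}_-}$, $C_\emptyset^\emptyset=1$. Write $\mathbf{j}\preceq\mathbf{q}$ if $j_1+\dots+j_s\le q_1+\dots+q_s$ for all $s$. Let $\mathfrak{H}=\mathbb{Q}\langle e_0,e_1\rangle$, $\mathfrak{H}^1=\mathbb{Q}+e_1\mathfrak{H}$, with shuffle product $\sqcup\!\sqcup$: $w\sqcup\!\sqcup 1=1\sqcup\!\sqcup w=w$, $u_1w_1\sqcup\!\sqcup u_2w_2=u_1(w_1\sqcup\!\sqcup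 u_2w_2)+u_2(u_1w_1\sqcup\!\sqcup w_2)$ ($u_i\in\{e_0,e_1\}$), $\mathbb{Q}$-bilinear. Define $w_{\mathbf{j}}^{\mathbf{r}}=(w_{\mathbf{j}_-}^{\mathbf{r}_-}\sqcup\!\sqcup e_1^{\sqcup\!\sqcup r_n})e_0^{1+j_n}$, $w_\emptyset^\emptyset=1$ ($e_1^{\sqcup\!\sqcup r}$ = $r$-fold shuffle of $e_1$). $L(\cdot;z):\mathfrak{H}^1\to\mathbb{C}$ is $\mathbb{Q}$-linear with $L(e_1e_0^{k_1-1}\cdots e_1e_0^{k_n-1};z)=\mathrm{Li}_{k_1,\dots,k_n}(z)$, $L(1;z)=1$ (it satisfies $L(w_1;z)L(w_2;z)=L(w_1\sqcup\!\sqcup w_2;z)$). For $\mathbf{q},\mathbf{r}\in(\mathbb{Z}_{\ge0})^n$ write $\mathbf{r}=(\{0\}^{n'},r''_1,\dots,r''_{n''})=(\mathbf{r}',\mathbf{r}'')$ with $r''_1\ge1$, $\mathbf{q}=(\mathbf{q}',\mathbf{q}'')$ with $\mathbf{q}'$ of length $n'$, and $\overline{\mathbf{q}}=(|\mathbf{q}'|+n'+q''_1,q''_2,\dots,q''_{n''})$ (or $\emptyset$ if $\mathbf{q}''=\emptyset$). Define $f_{\mathbf{q}}^{\mathbf{r}}(\sigma)=B_{\mathbf{q}'}\sum_{\mathbf{j}\preceq\overline{\mathbf{q}}}C_{\overline{\mathbf{q}}}^{\mathbf{j}}(i\sigma)^{|\mathbf{q}|+n'-|\mathbf{j}|}L(w_{\mathbf{j}}^{\mathbf{r}''};e^{i\sigma})$,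 sum over $\mathbf{j}\in(\mathbb{Z}_{\ge0})^{n''}$; thus $f_{\emptyset}^{\emptyset}=1$ and $f_{\mathbf{q}}^{\mathbf{r}}(\sigma)=B_{\mathbf{q}}(i\sigma)^{|\mathbf{q}|+n}$ if $\mathbf{r}=(\{0\}^n)$, $n\ge1$. *)

theory Defs
  imports "HOL-Analysis.Analysis"
begin

text \<open>Indices are lists of naturals (k_1,...,k_n).
  Hsum ks M = sum over 0<m_1<...<m_l<M of 1/(m_1^k_1 ... m_l^k_l).\<close>

function Hsum :: "nat list \<Rightarrow> nat \<Rightarrow> complex" where
  "Hsum ks M = (if ks = [] then 1
     else (\<Sum>m\<in>{1..<M}. Hsum (butlast ks) m / of_nat m ^ last ks))"
  by auto
termination by (relation "Wellfounded.measure (\<lambda>(ks, M). length ks)") auto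

text \<open>Li_k(z) = sum over 0<m_1<...<m_n of z^m_n/(m_1^k_1...m_n^k_n), the outer sum over
  m_n taken as an ordinary series (in increasing order of m_n); Li of the empty index is 1.\<close>
definition Li :: "nat list \<Rightarrow> complex \<Rightarrow> complex" where
  "Li ks z = (if ks = [] then 1
     else (\<Sum>M. z ^ Suc M / of_nat (Suc M) ^ last ks * Hsum (butlast ks) (Suc M)))"

datatype letter = e0 | e1

type_synonym word = "letter list"

text \<open>Elements of the noncommutative polynomial algebra with nonnegative integer
  coefficients are represented as lists of words (a word occurring m times has coefficient m).\<close>

fun shuf :: "'a list \<Rightarrow> 'a list \<Rightarrow> 'a list list" where
  "shuf [] v = [v]"
| "shuf u [] = [u]"
| "shuf (a # u) (b # v) = map (Cons a) (shuf u (b # v)) @ map (Cons b) (shuf (a # u) v)"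

definition shufL :: "word list \<Rightarrow> word list \<Rightarrow> word list" where
  "shufL xs ys = concat [shuf x y. x \<leftarrow> xs, y \<leftarrow> ys]"

definition e1pow :: "nat \<Rightarrow> word list" where
  "e1pow r = ((shufL [[e1]]) ^^ r) [[]]"

function wjr :: "nat list \<Rightarrow> nat list \<Rightarrow> word list" where
  "wjr j r = (if j = [] \<or> r = [] then [[]]
     else map (\<lambda>u. u @ replicate (Suc (last j)) e0)
            (shufL (wjr (butlast j) (butlast r)) (e1pow (last r))))"
  by auto
termination by (relation "Wellfounded.measure (\<lambda>(j, r). length j)") auto

text \<open>Index of a word e1 e0^(k_1-1) ... e1 e0^(k_n-1)\<close>
function word_idx :: "word \<Rightarrow> nat list" where
  "word_idx [] = []"
| "word_idx (e1 # w) = Suc (length (takeWhile (\<lambda>x. x = e0) w)) # word_idx (dropWhile (\<lambda>x. x = e0) w)"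
| "word_idx (e0 # w) = word_idx w"
  by pat_completeness auto
termination by (relation "Wellfounded.measure length") (auto simp: le_imp_less_Suc length_dropWhile_le)

text \<open>L(.;z) on words of H^1 (empty word or starting with e1); its value on other words
  is left unspecified.  Extended linearly to lists of words.\<close>
definition Lword :: "word \<Rightarrow> complex \<Rightarrow> complex" where
  "Lword w z = (if w = [] then 1 else if hd w = e1 then Li (word_idx w) z else undefined)"

definition L :: "word list \<Rightarrow> complex \<Rightarrow> complex" where
  "L ws z = (\<Sum>w\<leftarrow>ws. Lword w z)"

function Bc :: "nat list \<Rightarrow> real" where
  "Bc q = (if q = [] then 1 else Bc (butlast q) / (real (sum_list q) + real (length q)))"
  by auto
termination by (relation "Wellfounded.measure length") auto

function Cc :: "nat list \<Rightarrow> nat list \<Rightarrow> real" where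
  "Cc q j = (if q = [] \<or> j = [] then 1
     else (-1) ^ last j * fact (sum_list q - sum_list (butlast j)) / fact (sum_list q - sum_list j)
          * Cc (butlast q) (butlast j))"
  by auto
termination by (relation "Wellfounded.measure (\<lambda>(q, j). length q)") auto

definition idx_preceq :: "nat list \<Rightarrow> nat list \<Rightarrow> bool" where
  "idx_preceq j q = (\<forall>s\<le>length q. sum_list (take s j) \<le> sum_list (take s q))"

definition fqr :: "nat list \<Rightarrow> nat list \<Rightarrow> real \<Rightarrow> complex" where
  "fqr q r \<sigma> =
    (let n' = length (takeWhile (\<lambda>x. x = 0) r);
         r'' = dropWhile (\<lambda>x. x = 0) r;
         q' = take n' q;
         q'' = drop n' q;
         qbar = (if q'' = [] then [] else (sum_list q' + n' + hd q'') # tl q'')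
     in of_real (Bc q') *
        (\<Sum>j\<in>{j. length j = length qbar \<and> idx_preceq j qbar}.
            of_real (Cc qbar j) * (\<i> * of_real \<sigma>) ^ (sum_list q + n' - sum_list j)
            * L (wjr j r'') (exp (\<i> * of_real \<sigma>))))"

end

(*
  Write r = 0^n' r'' with r'' empty or starting with a positive entry, and q = q' q'' accordingly.
  Then f_q^r = B_q' F, where F is the sum over j below qbar of C_qbar^j (i sigma)^(...) L(w_j^r'').
  Grouping F according to j = (j', t), each group has the shape
  sum_t c_Q(t) (i sigma)^(Q - t) X_t(sigma) with c_Q(t) = (-1)^t Q!/(Q - t)!, and its derivative
  telescopes: X_t is L of words ending in e0^(t+1), removing a final e0 is differentiation,
  d/dsigma Li_(k,s+1)(e^(i sigma)) = i Li_(k,s)(e^(i sigma)), and X_0 differentiates to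
  i L(w_j'^r-) Li_1^(r_n) by the shuffle product formula on the unit circle.  What survives is
  i (i sigma)^(q_n) Li_1^(r_n) f_(q-)^(r-).

  The analysis behind this: the coefficients of Li_(k,s) have bounded variation and tend to 0
  (the nested harmonic sums grow at most like sqrt m), so by Dirichlet's test the series converge
  uniformly on arcs of the unit circle avoiding 1 and can be differentiated termwise there.
  The shuffle product formula is proved on the open disc (both sides have the same derivative
  and vanish at 0) and extended to the circle by Abel's theorem.
*)
theory Submission
  imports Defs
begin

section \<open>Summation by parts: the theorems of Dirichlet and Abel\<close>

lemma sum_by_parts:
  fixes a b :: "nat \<Rightarrow> 'a::ring"
  assumes "m \<le> n"
  shows "(\<Sum>k=m..<n. a k * b k)
         = a n * (\<Sum>k=m..<n. b k) - (\<Sum>k=m..<n. (a (Suc k) - a k) * (\<Sum>i=m..<Suc k. b i))"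
  using assms
proof (induction n rule: dec_induct)
  case (step n)
  then show ?case by (simp add: algebra_simps)
qed simp

lemma norm_sum_by_parts_le:
  fixes a b :: "nat \<Rightarrow> 'a::real_normed_algebra"
  assumes "m \<le> n" and bound: "\<And>k. m \<le> k \<Longrightarrow> k \<le> n \<Longrightarrow> norm (\<Sum>i=m..<k. b i) \<le> B"
  shows "norm (\<Sum>k=m..<n. a k * b k) \<le> B * (norm (a n) + (\<Sum>k=m..<n. norm (a (Suc k) - a k)))"
proof -
  have B: "0 \<le> B" using bound[of m] \<open>m \<le> n\<close> by simp
  have "norm (\<Sum>k=m..<n. a k * b k)
        \<le> norm (a n * (\<Sum>k=m..<n. b k)) + norm (\<Sum>k=m..<n. (a (Suc k) - a k) * (\<Sum>i=m..<Suc k. b i))"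
    by (subst sum_by_parts[OF \<open>m \<le> n\<close>]) (rule norm_triangle_ineq4)
  also have "\<dots> \<le> norm (a n) * B + (\<Sum>k=m..<n. norm (a (Suc k) - a k) * B)"
  proof (rule add_mono)
    have "norm (a n * (\<Sum>k=m..<n. b k)) \<le> norm (a n) * norm (\<Sum>k=m..<n. b k)"
      by (rule norm_mult_ineq)
    also have "\<dots> \<le> norm (a n) * B" using bound[of n] \<open>m \<le> n\<close> by (simp add: mult_left_mono)
    finally show "norm (a n * (\<Sum>k=m..<n. b k)) \<le> norm (a n) * B" .
  next
    have "norm ((a (Suc k) - a k) * (\<Sum>i=m..<Suc k. b i)) \<le> norm (a (Suc k) - a k) * B"
      if "k \<in> {m..<n}" for k
    proof -
      have "norm ((a (Suc k) - a k) * (\<Sum>i=m..<Suc k. b i))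
            \<le> norm (a (Suc k) - a k) * norm (\<Sum>i=m..<Suc k. b i)"
        by (rule norm_mult_ineq)
      also have "\<dots> \<le> norm (a (Suc k) - a k) * B"
        using that bound[of "Suc k"] by (intro mult_left_mono) auto
      finally show ?thesis .
    qed
    then show "norm (\<Sum>k=m..<n. (a (Suc k) - a k) * (\<Sum>i=m..<Suc k. b i))
               \<le> (\<Sum>k=m..<n. norm (a (Suc k) - a k) * B)"
      by (rule sum_norm_le)
  qed
  finally show ?thesis by (simp add: algebra_simps sum_distrib_left)
qed

lemma Dirichlet_uniformly_convergent:
  fixes a :: "nat \<Rightarrow> 'a::{real_normed_algebra,banach}"
  assumes var: "summable (\<lambda>k. norm (a (Suc k) - a k))" and a0: "a \<longlonglongrightarrow> 0"
    and bound: "\<And>x m n. x \<in> A \<Longrightarrow> m \<le> n \<Longrightarrow> norm (\<Sum>k=m..<n. f k x) \<le> B"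
  shows "uniformly_convergent_on A (\<lambda>n x. \<Sum>k<n. a k * f k x)"
  unfolding uniformly_convergent_on_sum_iff
proof (intro allI impI)
  fix \<epsilon> :: real assume "\<epsilon> > 0"
  define D where "D = \<bar>B\<bar> + 1"
  define e where "e = \<epsilon> / (2 * D)"
  have D: "D > 0" "\<bar>B\<bar> < D" by (simp_all add: D_def add_nonneg_pos)
  have e: "e > 0" using \<open>\<epsilon> > 0\<close> D by (simp add: e_def)
  have "\<bar>B\<bar> * (e + e) < D * (e + e)" using D e by (intro mult_strict_right_mono) auto
  also have "D * (e + e) = \<epsilon>" using D by (simp add: e_def)
  finally have small: "\<bar>B\<bar> * (e + e) < \<epsilon>" .
  obtain N1 where N1: "\<And>n. n \<ge> N1 \<Longrightarrow> norm (a n) < e"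
    using LIMSEQ_D[OF a0 e] by (metis diff_zero)
  obtain N2 where N2: "\<And>m n. m \<ge> N2 \<Longrightarrow> norm (\<Sum>k=m..<n. norm (a (Suc k) - a k)) < e"
    using var e unfolding summable_Cauchy by blast
  show "\<exists>N. \<forall>m n x. N \<le> m \<longrightarrow> m \<le> n \<longrightarrow> x \<in> A \<longrightarrow> norm (\<Sum>k=m..<n. a k * f k x) < \<epsilon>"
  proof (intro exI allI impI)
    fix m n x assume "max N1 N2 \<le> m" "m \<le> n" "x \<in> A"
    have "norm (\<Sum>k=m..<n. a k * f k x)
               \<le> B * (norm (a n) + (\<Sum>k=m..<n. norm (a (Suc k) - a k)))"
      using \<open>m \<le> n\<close> by (rule norm_sum_by_parts_le) (use bound \<open>x \<in> A\<close> in blast)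
    also have "\<dots> \<le> \<bar>B\<bar> * (norm (a n) + (\<Sum>k=m..<n. norm (a (Suc k) - a k)))"
      by (intro mult_right_mono add_nonneg_nonneg sum_nonneg) (simp_all add: abs_ge_self)
    also have "\<dots> \<le> \<bar>B\<bar> * (e + e)"
    proof (intro mult_left_mono add_mono)
      show "norm (a n) \<le> e" using N1[of n] \<open>max N1 N2 \<le> m\<close> \<open>m \<le> n\<close> by simp
      show "(\<Sum>k=m..<n. norm (a (Suc k) - a k)) \<le> e"
        using N2[of m n] \<open>max N1 N2 \<le> m\<close> by (simp add: sum_nonneg abs_of_nonneg)
    qed simp
    also have "\<dots> < \<epsilon>" by (rule small)
    finally show "norm (\<Sum>k=m..<n. a k * f k x) < \<epsilon>" .
  qed
qed

lemma Abel_uniformly_convergent: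
  fixes b :: "nat \<Rightarrow> 'a::{real_normed_field,banach}"
  assumes "summable b"
  shows "uniformly_convergent_on {0..1} (\<lambda>n \<rho>. \<Sum>k<n. b k * of_real \<rho> ^ k)"
  unfolding uniformly_convergent_on_sum_iff
proof (intro allI impI)
  fix \<epsilon> :: real assume "\<epsilon> > 0"
  then obtain N where N: "\<And>m n. m \<ge> N \<Longrightarrow> norm (\<Sum>k=m..<n. b k) < \<epsilon> / 2"
    using assms unfolding summable_Cauchy by (metis half_gt_zero)
  show "\<exists>N. \<forall>m n \<rho>. N \<le> m \<longrightarrow> m \<le> n \<longrightarrow> \<rho> \<in> {0..1}
          \<longrightarrow> norm (\<Sum>k=m..<n. b k * of_real \<rho> ^ k) < \<epsilon>"
  proof (intro exI allI impI)
    fix m n \<rho> assume m: "N \<le> m" and "m \<le> n" and "\<rho> \<in> {0..(1::real)}"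
    then have \<rho>: "0 \<le> \<rho>" "\<rho> \<le> 1" by auto
    have dec: "norm (of_real \<rho> ^ Suc k - of_real \<rho> ^ k :: 'a) = \<rho> ^ k - \<rho> ^ Suc k" for k
    proof -
      have "norm (of_real \<rho> ^ Suc k - of_real \<rho> ^ k :: 'a) = \<bar>\<rho> ^ Suc k - \<rho> ^ k\<bar>"
        by (metis norm_of_real of_real_diff of_real_power)
      moreover have "\<rho> ^ Suc k \<le> \<rho> ^ k" using \<rho> by (simp add: mult_left_le_one_le)
      ultimately show ?thesis by simp
    qed
    have "norm (\<Sum>k=m..<n. b k * of_real \<rho> ^ k) = norm (\<Sum>k=m..<n. of_real \<rho> ^ k * b k)"
      by (simp add: mult.commute)
    also have "\<dots> \<le> \<epsilon> / 2 * (norm (of_real \<rho> ^ n :: 'a) + (\<Sum>k=m..<n. \<rho> ^ k - \<rho> ^ Suc k))"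
      unfolding dec[symmetric]
      by (rule norm_sum_by_parts_le[OF \<open>m \<le> n\<close>]) (rule less_imp_le[OF N[OF m]])
    also have "(\<Sum>k=m..<n. \<rho> ^ k - \<rho> ^ Suc k) = \<rho> ^ m - \<rho> ^ n"
      using sum_Suc_diff'[OF \<open>m \<le> n\<close>, of "power \<rho>"] by (simp add: sum_subtractf)
    also have "norm (of_real \<rho> ^ n :: 'a) + (\<rho> ^ m - \<rho> ^ n) = \<rho> ^ m"
      using \<rho> by (simp add: norm_power)
    also have "\<epsilon> / 2 * \<rho> ^ m \<le> \<epsilon> / 2 * 1"
      using \<rho> \<open>\<epsilon> > 0\<close> by (intro mult_left_mono power_le_one) auto
    also have "\<dots> < \<epsilon>" using \<open>\<epsilon> > 0\<close> by simp
    finally show "norm (\<Sum>k=m..<n. b k * of_real \<rho> ^ k) < \<epsilon>" .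
  qed
qed

theorem Abel_limit_theorem:
  fixes b :: "nat \<Rightarrow> 'a::{real_normed_field,banach}"
  assumes "summable b"
  shows "((\<lambda>\<rho>. \<Sum>n. b n * of_real \<rho> ^ n) \<longlongrightarrow> (\<Sum>n. b n)) (at_left 1)"
proof -
  have lim: "uniform_limit {0..1} (\<lambda>n \<rho>. \<Sum>k<n. b k * of_real \<rho> ^ k)
               (\<lambda>\<rho>. \<Sum>k. b k * of_real \<rho> ^ k) sequentially"
    by (rule uniform_limit_suminf[OF Abel_uniformly_convergent[OF assms]])
  have "continuous_on {0..1} (\<lambda>\<rho>. \<Sum>k. b k * of_real \<rho> ^ k)"
    by (rule uniform_limit_theorem[OF _ lim]) (auto intro!: always_eventually continuous_intros)
  then have "continuous (at 1 within {0..1}) (\<lambda>\<rho>. \<Sum>k. b k * of_real \<rho> ^ k)"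
    by (simp add: continuous_on_eq_continuous_within)
  then show ?thesis by (simp add: continuous_within at_within_Icc_at_left)
qed

lemma has_vector_derivative_series:
  fixes f f' :: "nat \<Rightarrow> real \<Rightarrow> 'a::banach"
  assumes S: "convex S" "open S" "x \<in> S"
    and f: "\<And>n t. t \<in> S \<Longrightarrow> (f n has_vector_derivative f' n t) (at t)"
    and unif: "uniformly_convergent_on S (\<lambda>n t. \<Sum>i<n. f' i t)"
    and sum: "summable (\<lambda>n. f n x)"
  shows "((\<lambda>t. \<Sum>n. f n t) has_vector_derivative (\<Sum>n. f' n x)) (at x)"
proof -
  have lim: "uniform_limit S (\<lambda>n t. \<Sum>i<n. f' i t) (\<lambda>t. \<Sum>i. f' i t) sequentially"
    by (rule uniform_limit_suminf[OF unif])
  have "\<exists>g. \<forall>t\<in>S. (\<lambda>n. f n t) sums g t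
          \<and> (g has_derivative (\<lambda>h. h *\<^sub>R (\<Sum>i. f' i t))) (at t within S)"
  proof (rule has_derivative_series[where f' = "\<lambda>n t h. h *\<^sub>R f' n t"])
    show "(f n has_derivative (\<lambda>h. h *\<^sub>R f' n t)) (at t within S)" if "t \<in> S" for n t
      using f[OF that, of n] unfolding has_vector_derivative_def by (rule has_derivative_at_withinI)
    show "\<forall>\<^sub>F n in sequentially. \<forall>t\<in>S. \<forall>h.
            norm ((\<Sum>i<n. h *\<^sub>R f' i t) - h *\<^sub>R (\<Sum>i. f' i t)) \<le> e * norm h" if "e > 0" for e
      using uniform_limitD[OF lim that]
    proof eventually_elim
      case (elim n)
      show ?case
      proof (intro ballI allI)
        fix t h assume "t \<in> S"
        have "norm ((\<Sum>i<n. h *\<^sub>R f' i t) - h *\<^sub>R (\<Sum>i. f' i t))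
              = \<bar>h\<bar> * norm ((\<Sum>i<n. f' i t) - (\<Sum>i. f' i t))"
          by (simp flip: scaleR_sum_right scaleR_diff_right)
        also have "\<dots> \<le> \<bar>h\<bar> * e"
          using elim \<open>t \<in> S\<close> by (intro mult_left_mono) (auto simp: dist_norm)
        finally show "norm ((\<Sum>i<n. h *\<^sub>R f' i t) - h *\<^sub>R (\<Sum>i. f' i t)) \<le> e * norm h"
          by (simp add: mult.commute)
      qed
    qed
  qed (use S sum in \<open>auto simp: summable_sums\<close>)
  then obtain g where g: "\<And>t. t \<in> S \<Longrightarrow> (\<lambda>n. f n t) sums g t"
    "\<And>t. t \<in> S \<Longrightarrow> (g has_derivative (\<lambda>h. h *\<^sub>R (\<Sum>i. f' i t))) (at t within S)"
    by blast
  have "(g has_vector_derivative (\<Sum>n. f' n x)) (at x)"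
    using g(2)[OF \<open>x \<in> S\<close>] at_within_open[OF \<open>x \<in> S\<close> \<open>open S\<close>]
    by (simp add: has_vector_derivative_def)
  then show ?thesis
    by (rule has_vector_derivative_transform_within_open[OF _ \<open>open S\<close> \<open>x \<in> S\<close>])
       (use g(1) in \<open>simp add: sums_iff\<close>)
qed

lemma norm_sum_power_le:
  fixes z :: "'a::real_normed_field"
  assumes "norm z \<le> 1" "z \<noteq> 1"
  shows "norm (\<Sum>k=m..<n. z ^ k) \<le> 2 / norm (1 - z)"
proof (cases "m \<le> n")
  case True
  have "(\<Sum>k=m..<n. z ^ k) = (\<Sum>k<n. z ^ k) - (\<Sum>k<m. z ^ k)"
    using True by (simp add: sum_diff_nat_ivl atLeast0LessThan[symmetric])
  also have "\<dots> = ((1 - z ^ n) - (1 - z ^ m)) / (1 - z)"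
    using assms(2) by (simp add: sum_gp_strict diff_divide_distrib)
  also have "\<dots> = (z ^ m - z ^ n) / (1 - z)"
    by (rule arg_cong[where f = "\<lambda>x. x / (1 - z)"]) simp
  finally have "norm (\<Sum>k=m..<n. z ^ k) = norm (z ^ m - z ^ n) / norm (1 - z)"
    by (simp add: norm_divide)
  also have "\<dots> \<le> (1 + 1) / norm (1 - z)"
    using assms
    by (intro divide_right_mono order.trans[OF norm_triangle_ineq4] add_mono)
       (auto simp: norm_power power_le_one)
  finally show ?thesis by simp
qed simp

section \<open>Growth of the nested harmonic sums\<close>

lemma sum_inverse_sqrt_le: "(\<Sum>i=1..n. 1 / sqrt (real i)) \<le> 2 * sqrt (real n)"
proof (induction n)
  case (Suc n)
  define a b where "a = sqrt (real (Suc n))" and "b = sqrt (real n)"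
  have ab: "0 < a" "0 \<le> b" "a^2 = b^2 + 1" by (simp_all add: a_def b_def)
  have "0 \<le> (a - b)^2" by simp
  then have "1 \<le> 2 * a * (a - b)" using ab(3) by (simp add: power2_eq_square algebra_simps)
  then have "1 / a \<le> 2 * (a - b)" by (subst pos_divide_le_eq[OF ab(1)]) (simp add: algebra_simps)
  moreover have "(\<Sum>i=1..Suc n. 1 / sqrt (real i)) = (\<Sum>i=1..n. 1 / sqrt (real i)) + 1 / a"
    by (simp add: a_def)
  ultimately show ?case using Suc.IH by (simp add: a_def b_def)
qed simp

lemma summable_inverse_mult_sqrt: "summable (\<lambda>n. 1 / (real n * sqrt (real n)))"
proof -
  have "1 / (real n * sqrt (real n)) = real n powr (- (3/2))" for n
  proof (cases "n = 0")
    case False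
    have "real n powr (3/2) = real n powr (1 + 1/2)" by simp
    also have "\<dots> = real n powr 1 * real n powr (1/2)" by (rule powr_add)
    also have "\<dots> = real n * sqrt (real n)" using False by (simp add: powr_half_sqrt)
    finally show ?thesis by (simp add: powr_minus_divide)
  qed simp
  then show ?thesis using summable_real_powr_iff[of "- (3/2)"] by simp
qed

lemma power_diff_le_mult_diff:
  fixes a b :: real
  assumes "0 \<le> b" "b \<le> a" "a \<le> 1"
  shows "a ^ s - b ^ s \<le> real s * (a - b)"
proof (induction s)
  case (Suc s)
  have "a ^ Suc s - b ^ Suc s = a * (a ^ s - b ^ s) + (a - b) * b ^ s"
    by (simp add: algebra_simps)
  also have "\<dots> \<le> 1 * (real s * (a - b)) + (a - b) * 1"
    using assms Suc.IH
    by (intro add_mono mult_mono mult_left_mono power_le_one) (auto simp: power_mono)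
  finally show ?case by (simp add: algebra_simps)
qed simp

lemma inverse_power_diff_le:
  assumes "1 \<le> (x::real)"
  shows "1 / x ^ s - 1 / (x + 1) ^ s \<le> real s / x\<^sup>2"
proof -
  have "1 / x ^ s - 1 / (x + 1) ^ s = (1 / x) ^ s - (1 / (x + 1)) ^ s"
    by (simp add: power_one_over)
  also have "\<dots> \<le> real s * (1 / x - 1 / (x + 1))"
    using assms by (intro power_diff_le_mult_diff) (auto simp: field_simps)
  also have "1 / x - 1 / (x + 1) \<le> 1 / x\<^sup>2"
  proof -
    have "1 / x - 1 / (x + 1) = 1 / (x * (x + 1))"
      using assms by (simp add: field_simps)
    also have "\<dots> \<le> 1 / x\<^sup>2"
      unfolding power2_eq_square using assms by (intro divide_left_mono mult_left_mono) auto
    finally show ?thesis .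
  qed
  then have "real s * (1 / x - 1 / (x + 1)) \<le> real s * (1 / x\<^sup>2)"
    by (rule mult_left_mono) simp
  finally show ?thesis by simp
qed

declare Hsum.simps [simp del]

lemma Hsum_Nil [simp]: "Hsum [] m = 1"
  by (subst Hsum.simps) simp

lemma Hsum_snoc [simp]: "Hsum (k @ [s]) m = (\<Sum>i=1..<m. Hsum k i / of_nat i ^ s)"
  by (subst Hsum.simps) simp

definition Hsum_re :: "nat list \<Rightarrow> nat \<Rightarrow> real" where
  "Hsum_re k m = Re (Hsum k m)"

lemma Hsum_eq_of_real: "Hsum k m = of_real (Hsum_re k m)"
proof (induction k arbitrary: m rule: rev_induct)
  case (snoc s k)
  have "Hsum (k @ [s]) m = of_real (\<Sum>i=1..<m. Hsum_re k i / real i ^ s)"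
    by (simp add: snoc.IH)
  then show ?case by (simp add: Hsum_re_def)
qed (simp add: Hsum_re_def)

lemma Hsum_re_Nil [simp]: "Hsum_re [] m = 1"
  by (simp add: Hsum_re_def)

lemma Hsum_re_snoc: "Hsum_re (k @ [s]) m = (\<Sum>i=1..<m. Hsum_re k i / real i ^ s)"
  unfolding Hsum_re_def[of "k @ [s]"] by (simp add: Hsum_eq_of_real[of k])

lemma Hsum_re_nonneg: "0 \<le> Hsum_re k m"
  by (induction k arbitrary: m rule: rev_induct) (simp_all add: Hsum_re_snoc sum_nonneg)

lemma Hsum_re_mono: "m \<le> m' \<Longrightarrow> Hsum_re k m \<le> Hsum_re k m'"
  by (cases k rule: rev_exhaust)
     (auto simp: Hsum_re_snoc Hsum_re_nonneg intro!: sum_mono2 divide_nonneg_nonneg)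

text \<open>The crude bound \<open>O(\<surd>m)\<close> (instead of \<open>O(log\<^sup>d m)\<close>) is all that the convergence
  arguments on the unit circle need.\<close>
lemma Hsum_re_le_sqrt:
  assumes "0 \<notin> set k" "1 \<le> m"
  shows "Hsum_re k m \<le> 2 ^ length k * sqrt (real m)"
  using assms
proof (induction k arbitrary: m rule: rev_induct)
  case (snoc s k)
  have s: "1 \<le> s" and k: "0 \<notin> set k" using snoc.prems by auto
  have "Hsum_re (k @ [s]) m \<le> (\<Sum>i=1..<m. 2 ^ length k * (1 / sqrt (real i)))"
    unfolding Hsum_re_snoc
  proof (rule sum_mono)
    fix i assume i: "i \<in> {1..<m}"
    have "real i \<le> real i ^ s" using i s by (simp add: power_increasing[of 1 s "real i", simplified])
    then have "Hsum_re k i / real i ^ s \<le> Hsum_re k i / real i"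
      using i by (intro divide_left_mono Hsum_re_nonneg) auto
    also have "\<dots> \<le> 2 ^ length k * sqrt (real i) / real i"
      using snoc.IH[OF k] i by (intro divide_right_mono) auto
    also have "\<dots> = 2 ^ length k * (1 / sqrt (real i))"
      using sqrt_divide_self_eq[of "real i"] by (simp add: divide_inverse mult.assoc)
    finally show "Hsum_re k i / real i ^ s \<le> 2 ^ length k * (1 / sqrt (real i))" .
  qed
  also have "\<dots> = 2 ^ length k * (\<Sum>i=1..<m. 1 / sqrt (real i))"
    by (simp add: sum_distrib_left)
  also have "\<dots> \<le> 2 ^ length k * (\<Sum>i=1..m. 1 / sqrt (real i))"
    by (intro mult_left_mono sum_mono2) auto
  also have "\<dots> \<le> 2 ^ length k * (2 * sqrt (real m))"
    by (intro mult_left_mono sum_inverse_sqrt_le) simp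
  finally show ?case by simp
qed simp

definition Li_coeff :: "nat list \<Rightarrow> nat \<Rightarrow> nat \<Rightarrow> real" where
  "Li_coeff k s n = Hsum_re k n / real n ^ s"

lemma Li_coeff_0: "s \<noteq> 0 \<Longrightarrow> Li_coeff k s 0 = 0"
  by (simp add: Li_coeff_def)

lemma Li_coeff_nonneg: "0 \<le> Li_coeff k s n"
  by (simp add: Li_coeff_def Hsum_re_nonneg)

lemma of_nat_mult_Li_coeff_Suc: "s \<noteq> 0 \<Longrightarrow> real n * Li_coeff k (Suc s) n = Li_coeff k s n"
  by (cases "n = 0") (simp_all add: Li_coeff_def)

lemma Li_coeff_le:
  assumes "0 \<notin> set k" "1 \<le> s"
  shows "Li_coeff k s n \<le> 2 ^ length k / sqrt (real n)"
proof (cases "n = 0")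
  case False
  have "real n \<le> real n ^ s" using False assms(2) by (simp add: power_increasing[of 1 s "real n", simplified])
  then have "Li_coeff k s n \<le> Hsum_re k n / real n"
    unfolding Li_coeff_def using False by (intro divide_left_mono Hsum_re_nonneg) auto
  also have "\<dots> \<le> 2 ^ length k * sqrt (real n) / real n"
    using Hsum_re_le_sqrt[OF assms(1), of n] False by (intro divide_right_mono) auto
  also have "\<dots> = 2 ^ length k / sqrt (real n)"
    using sqrt_divide_self_eq[of "real n"] by (simp add: divide_inverse mult.assoc)
  finally show ?thesis .
qed (use assms in \<open>simp add: Li_coeff_0\<close>)

lemma Li_coeff_bounded:
  assumes "0 \<notin> set k" "1 \<le> s"
  shows "Li_coeff k s n \<le> 2 ^ length k"
proof -
  have "2 ^ length k / sqrt (real n) \<le> 2 ^ length k"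
    by (cases "n = 0") (simp_all add: divide_le_eq)
  then show ?thesis using Li_coeff_le[OF assms, of n] by simp
qed

lemma Li_coeff_tendsto_0:
  assumes "0 \<notin> set k" "1 \<le> s"
  shows "Li_coeff k s \<longlonglongrightarrow> 0"
proof (rule tendsto_sandwich[of "\<lambda>_. 0" _ _ "\<lambda>n. 2 ^ length k / sqrt (real n)"])
  have "filterlim (\<lambda>n. sqrt (real n)) at_top sequentially"
    by (rule filterlim_compose[OF sqrt_at_top filterlim_real_sequentially])
  then show "(\<lambda>n. 2 ^ length k / sqrt (real n)) \<longlonglongrightarrow> 0"
    by (intro tendsto_divide_0[OF tendsto_const] filterlim_at_top_imp_at_infinity)
qed (use Li_coeff_le[OF assms] in \<open>simp_all add: Li_coeff_nonneg\<close>)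

lemma Hsum_re_Suc_minus_le:
  assumes "0 \<notin> set k"
  shows "Hsum_re k (Suc n) - Hsum_re k n \<le> 2 ^ length k / sqrt (real n)"
proof (cases k rule: rev_exhaust)
  case (snoc k' s)
  with assms have "Hsum_re k (Suc n) - Hsum_re k n = Li_coeff k' s n"
    by (simp add: Hsum_re_snoc Li_coeff_def)
  also have "\<dots> \<le> 2 ^ length k' / sqrt (real n)"
    using assms snoc by (intro Li_coeff_le) auto
  also have "\<dots> \<le> 2 ^ length k / sqrt (real n)"
    using snoc by (intro divide_right_mono) auto
  finally show ?thesis .
qed simp

lemma abs_Li_coeff_Suc_minus_le:
  assumes k: "0 \<notin> set k" and s: "1 \<le> s" and n: "1 \<le> n"
  shows "\<bar>Li_coeff k s (Suc n) - Li_coeff k s n\<bar>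
         \<le> 2 ^ length k * (1 + real s) * (1 / (real n * sqrt (real n)))"
proof -
  define x where "x = real n"
  have x: "1 \<le> x" using n by (simp add: x_def)
  have sx: "real (Suc n) = x + 1" by (simp add: x_def)
  define A where "A = (Hsum_re k (Suc n) - Hsum_re k n) / (x + 1) ^ s"
  define B where "B = Hsum_re k n * (1 / x ^ s - 1 / (x + 1) ^ s)"
  have "Li_coeff k s (Suc n) - Li_coeff k s n = A - B"
    unfolding Li_coeff_def A_def B_def sx by (simp add: x_def diff_divide_distrib right_diff_distrib)
  moreover have "0 \<le> A" using Hsum_re_mono[of n "Suc n" k] x by (simp add: A_def)
  moreover have "0 \<le> B"
    using x by (auto simp: B_def Hsum_re_nonneg divide_le_eq intro!: mult_nonneg_nonneg power_mono)
  moreover have "A \<le> 2 ^ length k * (1 / (x * sqrt x))"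
  proof -
    have "x \<le> (x + 1) ^ s" using x s by (smt (verit) power_increasing power_one_right)
    then have "A \<le> (Hsum_re k (Suc n) - Hsum_re k n) / x"
      unfolding A_def using x Hsum_re_mono[of n "Suc n" k] by (intro divide_left_mono) auto
    also have "\<dots> \<le> (2 ^ length k / sqrt x) / x"
      using Hsum_re_Suc_minus_le[OF k, of n] x by (intro divide_right_mono) (auto simp: x_def)
    finally show ?thesis by (simp add: mult.commute)
  qed
  moreover have "B \<le> 2 ^ length k * (real s * (1 / (x * sqrt x)))"
  proof -
    have "B \<le> (2 ^ length k * sqrt x) * (real s / x\<^sup>2)"
      unfolding B_def using Hsum_re_le_sqrt[OF k n] x
      by (intro mult_mono inverse_power_diff_le) (auto simp: x_def divide_le_eq intro!: power_mono)
    also have "\<dots> = 2 ^ length k * (real s * (sqrt x / x\<^sup>2))" by simp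
    also have "sqrt x / x\<^sup>2 = 1 / (x * sqrt x)"
    proof -
      have "x\<^sup>2 = (x * sqrt x) * sqrt x" using x by (simp add: power2_eq_square mult.assoc)
      then show ?thesis using x by simp
    qed
    finally show ?thesis .
  qed
  ultimately have "\<bar>Li_coeff k s (Suc n) - Li_coeff k s n\<bar>
                   \<le> 2 ^ length k * (1 / (x * sqrt x)) + 2 ^ length k * (real s * (1 / (x * sqrt x)))"
    by linarith
  also have "\<dots> = 2 ^ length k * (1 + real s) * (1 / (real n * sqrt (real n)))"
    by (simp add: x_def algebra_simps)
  finally show ?thesis .
qed

lemma Li_coeff_bounded_variation:
  assumes "0 \<notin> set k" "1 \<le> s"
  shows "summable (\<lambda>n. \<bar>Li_coeff k s (Suc n) - Li_coeff k s n\<bar>)"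
  by (rule summable_comparison_test'[where N = 1,
        OF summable_mult[OF summable_inverse_mult_sqrt, of "2 ^ length k * (1 + real s)"]])
     (use abs_Li_coeff_Suc_minus_le[OF assms] in simp)

section \<open>Polylogarithms on the closed unit disc\<close>

lemma suminf_Suc_shift:
  fixes f :: "nat \<Rightarrow> 'a::real_normed_vector"
  assumes "f 0 = 0"
  shows "(\<Sum>n. f (Suc n)) = (\<Sum>n. f n)"
proof -
  have "(\<lambda>n. f (Suc n)) sums s \<longleftrightarrow> f sums s" for s
    using assms by (simp add: sums_Suc_iff)
  then show ?thesis by (simp add: suminf_def)
qed

lemma Li_snoc_eq_suminf:
  assumes "s \<noteq> 0"
  shows "Li (k @ [s]) z = (\<Sum>n. of_real (Li_coeff k s n) * z ^ n)"
proof -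
  have "Li (k @ [s]) z = (\<Sum>n. of_real (Li_coeff k s (Suc n)) * z ^ Suc n)"
    by (simp add: Li_def Li_coeff_def Hsum_eq_of_real mult_ac)
  also have "\<dots> = (\<Sum>n. of_real (Li_coeff k s n) * z ^ n)"
    by (rule suminf_Suc_shift) (simp add: Li_coeff_0 assms)
  finally show ?thesis .
qed

lemma Li_snoc_0: "s \<noteq> 0 \<Longrightarrow> Li (k @ [s]) 0 = 0"
  by (simp add: Li_snoc_eq_suminf Li_coeff_0)

lemma of_nat_mult_of_real_Li_coeff_Suc:
  assumes "s \<noteq> 0"
  shows "of_nat n * (of_real (Li_coeff k (Suc s) n) :: complex) = of_real (Li_coeff k s n)"
proof -
  have "of_real (real n * Li_coeff k (Suc s) n) = (of_real (Li_coeff k s n) :: complex)"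
    by (simp only: of_nat_mult_Li_coeff_Suc[OF assms])
  then show ?thesis by simp
qed

lemma summable_Li_coeff_disk:
  fixes z :: complex
  assumes "0 \<notin> set k" "1 \<le> s" "norm z < 1"
  shows "summable (\<lambda>n. norm (of_real (Li_coeff k s n) * z ^ n))"
proof (rule summable_comparison_test')
  show "summable (\<lambda>n. 2 ^ length k * norm z ^ n)"
    using assms(3) by (intro summable_mult summable_geometric) simp
  show "norm (norm (of_real (Li_coeff k s n) * z ^ n)) \<le> 2 ^ length k * norm z ^ n" for n
    using Li_coeff_bounded[OF assms(1,2), of n] Li_coeff_nonneg[of k s n]
    by (simp add: norm_mult norm_power mult_right_mono)
qed

lemma Li_has_field_derivative_disk:
  assumes "0 \<notin> set k" "1 \<le> s" "norm z < 1"
  shows "(Li (k @ [s]) has_field_derivative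
            (\<Sum>n. diffs (\<lambda>n. of_real (Li_coeff k s n)) n * z ^ n)) (at z)"
proof -
  have "((\<lambda>z. \<Sum>n. of_real (Li_coeff k s n) * z ^ n) has_field_derivative
          (\<Sum>n. diffs (\<lambda>n. of_real (Li_coeff k s n)) n * z ^ n)) (at z)"
    using assms
    by (intro termdiffs_strong'[of 1]) (auto intro: summable_norm_cancel[OF summable_Li_coeff_disk])
  moreover have "Li (k @ [s]) = (\<lambda>z. \<Sum>n. of_real (Li_coeff k s n) * z ^ n)"
    using assms(2) by (simp add: fun_eq_iff Li_snoc_eq_suminf)
  ultimately show ?thesis by simp
qed

lemma Li_snoc_Suc_has_field_derivative_disk:
  assumes "0 \<notin> set k" "1 \<le> s" "norm z < 1" "z \<noteq> 0"
  shows "(Li (k @ [Suc s]) has_field_derivative Li (k @ [s]) z / z) (at z)"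
proof -
  have "diffs (\<lambda>n. of_real (Li_coeff k (Suc s) n)) n = (of_real (Li_coeff k s (Suc n)) :: complex)"
    for n
    using of_nat_mult_of_real_Li_coeff_Suc[of s "Suc n" k] assms(2) by (simp add: diffs_def)
  moreover have "(\<Sum>n. of_real (Li_coeff k s (Suc n)) * z ^ n) = Li (k @ [s]) z / z"
  proof -
    have "summable (\<lambda>n. of_real (Li_coeff k s (Suc n)) * z ^ Suc n)"
      using summable_norm_cancel[OF summable_Li_coeff_disk[OF assms(1,2,3)]]
      by (subst summable_Suc_iff)
    then have "(\<Sum>n. inverse z * (of_real (Li_coeff k s (Suc n)) * z ^ Suc n))
               = inverse z * (\<Sum>n. of_real (Li_coeff k s (Suc n)) * z ^ Suc n)"
      by (rule suminf_mult)
    also have "(\<Sum>n. of_real (Li_coeff k s (Suc n)) * z ^ Suc n) = Li (k @ [s]) z"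
      using assms(2)
      by (subst suminf_Suc_shift[where f = "\<lambda>n. of_real (Li_coeff k s n) * z ^ n"])
         (simp_all add: Li_coeff_0 Li_snoc_eq_suminf)
    finally show ?thesis using assms(4) by (simp add: field_simps)
  qed
  ultimately show ?thesis
    using Li_has_field_derivative_disk[of k "Suc s" z] assms by simp
qed

lemma Hsum_re_snoc_Suc:
  assumes "1 \<le> s"
  shows "Hsum_re (k @ [s]) (Suc n) = (\<Sum>i\<le>n. Li_coeff k s i)"
proof -
  have "{..n} = insert 0 {1..n}" by auto
  then have "(\<Sum>i\<le>n. Li_coeff k s i) = (\<Sum>i=1..n. Li_coeff k s i)"
    using assms by (simp add: Li_coeff_0)
  then show ?thesis
    by (simp add: Hsum_re_snoc Li_coeff_def atLeastLessThanSuc_atLeastAtMost)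
qed

lemma suminf_Hsum_re_Suc_power:
  assumes k: "0 \<notin> set k" and z: "norm z < 1"
  shows "(\<Sum>n. of_real (Hsum_re k (Suc n)) * z ^ n) = Li k z / (1 - z)"
proof -
  have geom: "(\<Sum>n. z ^ n) = 1 / (1 - z)" using suminf_geometric[OF z] by simp
  show ?thesis
  proof (cases k rule: rev_exhaust)
    case Nil
    then show ?thesis using geom by (simp add: Li_def)
  next
    case (snoc k' x)
    with k have k': "0 \<notin> set k'" "1 \<le> x" by auto
    have "Li k z * (\<Sum>n. z ^ n)
          = (\<Sum>n. of_real (Li_coeff k' x n) * z ^ n) * (\<Sum>n. z ^ n)"
      using k' by (simp add: snoc Li_snoc_eq_suminf)
    also have "\<dots> = (\<Sum>n. \<Sum>i\<le>n. of_real (Li_coeff k' x i) * z ^ i * z ^ (n - i))"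
      using z by (intro Cauchy_product summable_Li_coeff_disk k')
                 (auto simp: norm_power summable_geometric)
    also have "\<dots> = (\<Sum>n. of_real (Hsum_re k (Suc n)) * z ^ n)"
    proof (rule suminf_cong)
      fix n
      have "(\<Sum>i\<le>n. of_real (Li_coeff k' x i) * z ^ i * z ^ (n - i))
            = (\<Sum>i\<le>n. of_real (Li_coeff k' x i) * z ^ n)"
        by (intro sum.cong refl) (simp add: mult.assoc flip: power_add)
      also have "\<dots> = of_real (Hsum_re k (Suc n)) * z ^ n"
        using Hsum_re_snoc_Suc[OF k'(2)] by (simp add: snoc sum_distrib_right)
      finally show "(\<Sum>i\<le>n. of_real (Li_coeff k' x i) * z ^ i * z ^ (n - i))
                 = of_real (Hsum_re k (Suc n)) * z ^ n" .
    qed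
    finally have "Li k z * (\<Sum>n. z ^ n) = (\<Sum>n. of_real (Hsum_re k (Suc n)) * z ^ n)" .
    then show ?thesis using geom by simp
  qed
qed

lemma Li_snoc_1_has_field_derivative_disk:
  assumes k: "0 \<notin> set k" and z: "norm z < 1"
  shows "(Li (k @ [1]) has_field_derivative Li k z / (1 - z)) (at z)"
proof -
  have diffs: "diffs (\<lambda>n. of_real (Li_coeff k 1 n)) n = (of_real (Hsum_re k (Suc n)) :: complex)"
    for n
  proof -
    have "of_real (real (Suc n) * Li_coeff k 1 (Suc n)) = (of_real (Hsum_re k (Suc n)) :: complex)"
      by (simp add: Li_coeff_def)
    then show ?thesis by (simp add: diffs_def del: of_nat_Suc)
  qed
  show ?thesis
    using Li_has_field_derivative_disk[OF k order.refl z] suminf_Hsum_re_Suc_power[OF k z]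
    unfolding diffs by simp
qed

lemma Li_powser_uniformly_convergent:
  fixes g :: "'x \<Rightarrow> complex"
  assumes "0 \<notin> set k" "1 \<le> s" "\<delta> > 0"
    and g: "\<And>x. x \<in> A \<Longrightarrow> norm (g x) \<le> 1 \<and> \<delta> \<le> norm (1 - g x)"
  shows "uniformly_convergent_on A (\<lambda>N x. \<Sum>n<N. of_real (Li_coeff k s n) * g x ^ n)"
proof (rule Dirichlet_uniformly_convergent)
  show "summable (\<lambda>n. norm (of_real (Li_coeff k s (Suc n)) - of_real (Li_coeff k s n) :: complex))"
    using Li_coeff_bounded_variation[OF assms(1,2)] by (simp flip: of_real_diff)
  show "(\<lambda>n. of_real (Li_coeff k s n) :: complex) \<longlonglongrightarrow> 0"
    using tendsto_of_real[OF Li_coeff_tendsto_0[OF assms(1,2)]] by simp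
  show "norm (\<Sum>n=m..<n. g x ^ n) \<le> 2 / \<delta>" if "x \<in> A" for x m n
  proof -
    have "g x \<noteq> 1" using g[OF that] \<open>\<delta> > 0\<close> by auto
    then have "norm (\<Sum>n=m..<n. g x ^ n) \<le> 2 / norm (1 - g x)"
      using g[OF that] by (intro norm_sum_power_le) auto
    also have "\<dots> \<le> 2 / \<delta>"
      using g[OF that] \<open>\<delta> > 0\<close> by (intro divide_left_mono mult_pos_pos) auto
    finally show ?thesis .
  qed
qed

lemma summable_Li_coeff_boundary:
  fixes z :: complex
  assumes "0 \<notin> set k" "1 \<le> s" "norm z \<le> 1" "z \<noteq> 1"
  shows "summable (\<lambda>n. of_real (Li_coeff k s n) * z ^ n)"
proof -
  have "uniformly_convergent_on {z} (\<lambda>N z. \<Sum>n<N. of_real (Li_coeff k s n) * id z ^ n)"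
    using assms by (intro Li_powser_uniformly_convergent[where \<delta> = "norm (1 - z)"]) auto
  then show ?thesis
    by (auto simp: summable_iff_convergent dest: uniformly_convergent_imp_convergent)
qed

lemma exp_i_neq_1:
  assumes "0 < t" "t < 2 * pi"
  shows "exp (\<i> * of_real t) \<noteq> 1"
proof
  assume "exp (\<i> * of_real t) = 1"
  then obtain n :: int where n: "t = of_int (2 * n) * pi" unfolding exp_eq_1 by auto
  then have "0 < of_int (2 * n) * pi" "of_int (2 * n) * pi < 2 * pi" using assms by auto
  then have "0 < n" "n < 1" by (simp_all add: zero_less_mult_iff)
  then show False by simp
qed

lemma exp_i_bounded_away_from_1:
  assumes "0 < a" "b < 2 * pi"
  obtains \<delta> where "\<delta> > 0" "\<And>t. t \<in> {a..b} \<Longrightarrow> \<delta> \<le> norm (1 - exp (\<i> * of_real t))"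
proof (cases "a \<le> b")
  case True
  define f where "f t = norm (1 - exp (\<i> * of_real t))" for t
  have "continuous_on {a..b} f" unfolding f_def by (intro continuous_intros)
  moreover have "{a..b} \<noteq> {}" using True by simp
  ultimately have "\<exists>t0\<in>{a..b}. \<forall>t\<in>{a..b}. f t0 \<le> f t"
    by (intro continuous_attains_inf compact_Icc)
  then obtain t0 where t0: "t0 \<in> {a..b}" and min: "\<And>t. t \<in> {a..b} \<Longrightarrow> f t0 \<le> f t"
    by blast
  have "exp (\<i> * of_real t0) \<noteq> 1" using t0 assms by (intro exp_i_neq_1) auto
  then have "f t0 > 0" by (simp add: f_def)
  with min show ?thesis by (intro that[of "f t0"]) (auto simp: f_def)
qed (use that[of 1] in auto)

lemma exp_i_power_has_vector_derivative:
  "((\<lambda>t. exp (\<i> * of_real t) ^ n) has_vector_derivative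
      \<i> * of_nat n * exp (\<i> * of_real x) ^ n) (at x)"
proof -
  have "((\<lambda>w. exp (\<i> * w) ^ n) has_field_derivative \<i> * of_nat n * exp (\<i> * w) ^ n) (at w)" for w
  proof (cases n)
    case (Suc m)
    have "((\<lambda>w. exp (\<i> * w) ^ n) has_field_derivative
            of_nat n * exp (\<i> * w) ^ (n - 1) * (exp (\<i> * w) * \<i>)) (at w)"
      by (auto intro!: derivative_eq_intros simp: mult_ac)
    then show ?thesis by (simp add: Suc mult_ac)
  qed (auto intro!: derivative_eq_intros)
  from has_vector_derivative_real_field[OF this, of "of_real x" UNIV] show ?thesis by simp
qed

lemma Li_snoc_Suc_has_vector_derivative_circle:
  assumes k: "0 \<notin> set k" and s: "1 \<le> s" and \<sigma>: "0 < \<sigma>" "\<sigma> < 2 * pi"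
  shows "((\<lambda>t. Li (k @ [Suc s]) (exp (\<i> * of_real t))) has_vector_derivative
           \<i> * Li (k @ [s]) (exp (\<i> * of_real \<sigma>))) (at \<sigma>)"
proof -
  define E where "E t = exp (\<i> * of_real t)" for t
  define S where "S = {\<sigma> / 2 <..< \<sigma> / 2 + pi}"
  have "\<sigma> \<in> S" using \<sigma> by (simp add: S_def)
  obtain \<delta> where \<delta>: "\<delta> > 0" "\<And>t. t \<in> {\<sigma> / 2..\<sigma> / 2 + pi} \<Longrightarrow> \<delta> \<le> norm (1 - E t)"
    using exp_i_bounded_away_from_1[of "\<sigma> / 2" "\<sigma> / 2 + pi"] \<sigma> unfolding E_def by auto
  have E: "norm (E t) = 1" for t by (simp add: E_def)
  have "((\<lambda>t. \<Sum>n. of_real (Li_coeff k (Suc s) n) * E t ^ n) has_vector_derivative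
          (\<Sum>n. \<i> * (of_real (Li_coeff k s n) * E \<sigma> ^ n))) (at \<sigma>)"
  proof (rule has_vector_derivative_series[OF _ _ \<open>\<sigma> \<in> S\<close>])
    show "convex S" "open S" by (simp_all add: S_def)
    show "((\<lambda>t. of_real (Li_coeff k (Suc s) n) * E t ^ n) has_vector_derivative
            \<i> * (of_real (Li_coeff k s n) * E t ^ n)) (at t)" for n t
    proof -
      have "((\<lambda>t. of_real (Li_coeff k (Suc s) n) * E t ^ n) has_vector_derivative
              \<i> * (of_nat n * of_real (Li_coeff k (Suc s) n)) * E t ^ n) (at t)"
        using has_vector_derivative_mult_right[OF exp_i_power_has_vector_derivative,
                of "of_real (Li_coeff k (Suc s) n)" n t]
        by (simp add: E_def mult_ac)
      then show ?thesis
        using s by (simp add: mult.assoc of_nat_mult_of_real_Li_coeff_Suc del: of_nat_mult_Li_coeff_Suc)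
    qed
    have "uniformly_convergent_on S (\<lambda>N t. \<i> * (\<Sum>n<N. of_real (Li_coeff k s n) * E t ^ n))"
      using \<delta> E by (intro uniformly_convergent_mult Li_powser_uniformly_convergent[OF k s \<delta>(1)])
                      (auto simp: S_def)
    then show "uniformly_convergent_on S (\<lambda>N t. \<Sum>n<N. \<i> * (of_real (Li_coeff k s n) * E t ^ n))"
      by (simp add: sum_distrib_left)
    show "summable (\<lambda>n. of_real (Li_coeff k (Suc s) n) * E \<sigma> ^ n)"
      using E exp_i_neq_1[OF \<sigma>] k s by (intro summable_Li_coeff_boundary) (auto simp: E_def)
  qed
  moreover have "(\<Sum>n. \<i> * (of_real (Li_coeff k s n) * E \<sigma> ^ n)) = \<i> * Li (k @ [s]) (E \<sigma>)"
    using summable_Li_coeff_boundary[OF k s, of "E \<sigma>"] E exp_i_neq_1[OF \<sigma>] s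
    by (simp add: suminf_mult Li_snoc_eq_suminf E_def)
  ultimately show ?thesis
    using s by (simp add: Li_snoc_eq_suminf E_def)
qed

lemma Li_snoc_tendsto_radially:
  assumes "0 \<notin> set k" "1 \<le> s" "norm z = 1" "z \<noteq> 1"
  shows "((\<lambda>\<rho>. Li (k @ [s]) (of_real \<rho> * z)) \<longlongrightarrow> Li (k @ [s]) z) (at_left 1)"
proof -
  have "((\<lambda>\<rho>. \<Sum>n. of_real (Li_coeff k s n) * z ^ n * of_real \<rho> ^ n) \<longlongrightarrow>
          (\<Sum>n. of_real (Li_coeff k s n) * z ^ n)) (at_left 1)"
    using assms by (intro Abel_limit_theorem summable_Li_coeff_boundary) auto
  then show ?thesis
    using assms(2) by (simp add: Li_snoc_eq_suminf power_mult_distrib mult_ac)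
qed

section \<open>Words and the shuffle product\<close>

lemma word_idx_snoc_e1: "word_idx (w @ [e1]) = word_idx w @ [1]"
proof (induction w rule: word_idx.induct)
  case (2 w)
  show ?case
  proof (cases "\<forall>x\<in>set w. x = e0")
    case True
    then have "takeWhile (\<lambda>x. x = e0) w = w" "dropWhile (\<lambda>x. x = e0) w = []"
      "takeWhile (\<lambda>x. x = e0) (w @ [e1]) = w" "dropWhile (\<lambda>x. x = e0) (w @ [e1]) = [e1]"
      by (simp_all add: takeWhile_append2 dropWhile_append2)
    then show ?thesis by (simp only: word_idx.simps append.simps) simp
  next
    case False
    then have "takeWhile (\<lambda>x. x = e0) (w @ [e1]) = takeWhile (\<lambda>x. x = e0) w"
      "dropWhile (\<lambda>x. x = e0) (w @ [e1]) = dropWhile (\<lambda>x. x = e0) w @ [e1]"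
      by (auto simp: takeWhile_append1 dropWhile_append1)
    then show ?thesis using 2 by simp
  qed
qed simp_all

lemma word_idx_neq_Nil: "e1 \<in> set w \<Longrightarrow> word_idx w \<noteq> []"
  by (induction w rule: word_idx.induct) auto

lemma zero_notin_word_idx: "0 \<notin> set (word_idx w)"
  by (induction w rule: word_idx.induct) auto

lemma word_idx_snoc_e0:
  "e1 \<in> set w \<Longrightarrow> word_idx (w @ [e0]) = butlast (word_idx w) @ [Suc (last (word_idx w))]"
proof (induction w rule: word_idx.induct)
  case (2 w)
  show ?case
  proof (cases "\<forall>x\<in>set w. x = e0")
    case True
    then have "takeWhile (\<lambda>x. x = e0) w = w" "dropWhile (\<lambda>x. x = e0) w = []"
      "takeWhile (\<lambda>x. x = e0) (w @ [e0]) = w @ [e0]" "dropWhile (\<lambda>x. x = e0) (w @ [e0]) = []"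
      by simp_all
    then show ?thesis by (simp only: word_idx.simps append.simps) simp
  next
    case False
    define v where "v = dropWhile (\<lambda>x. x = e0) w"
    from False have tw: "takeWhile (\<lambda>x. x = e0) (w @ [e0]) = takeWhile (\<lambda>x. x = e0) w"
      "dropWhile (\<lambda>x. x = e0) (w @ [e0]) = v @ [e0]"
      by (auto simp: v_def takeWhile_append1 dropWhile_append1)
    from False have "v \<noteq> []" by (auto simp: v_def dropWhile_eq_Nil_conv)
    moreover from this have "hd v \<noteq> e0" unfolding v_def by (rule hd_dropWhile)
    then have "hd v = e1" by (cases "hd v") simp_all
    ultimately have "e1 \<in> set v" by (metis hd_in_set)
    then have IH: "word_idx (v @ [e0]) = butlast (word_idx v) @ [Suc (last (word_idx v))]"
      and "word_idx v \<noteq> []"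
      using 2 word_idx_neq_Nil unfolding v_def by auto
    have "word_idx (e1 # w @ [e0]) = Suc (length (takeWhile (\<lambda>x. x = e0) w)) # word_idx (v @ [e0])"
      using tw by simp
    moreover have "word_idx (e1 # w) = Suc (length (takeWhile (\<lambda>x. x = e0) w)) # word_idx v"
      by (simp add: v_def)
    ultimately show ?thesis using IH \<open>word_idx v \<noteq> []\<close> by simp
  qed
qed simp_all

definition in_H1 :: "word \<Rightarrow> bool" where
  "in_H1 w \<longleftrightarrow> w = [] \<or> hd w = e1"

lemma in_H1_Nil [simp]: "in_H1 []"
  by (simp add: in_H1_def)

lemma in_H1_append: "in_H1 u \<Longrightarrow> u \<noteq> [] \<Longrightarrow> in_H1 (u @ v)"
  by (cases u) (auto simp: in_H1_def)

lemma in_H1_snoc_imp: "in_H1 (u @ [a]) \<Longrightarrow> in_H1 u"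
  by (cases u) (auto simp: in_H1_def)

lemma e1_in_set_if_in_H1: "in_H1 w \<Longrightarrow> w \<noteq> [] \<Longrightarrow> e1 \<in> set w"
  by (cases w) (auto simp: in_H1_def)

lemma Lword_Nil [simp]: "Lword [] z = 1"
  by (simp add: Lword_def)

lemma Lword_eq_Li: "in_H1 w \<Longrightarrow> w \<noteq> [] \<Longrightarrow> Lword w z = Li (word_idx w) z"
  by (simp add: Lword_def in_H1_def)

lemma word_idx_snoc_cases:
  assumes "in_H1 w" "w \<noteq> []"
  obtains k s where "word_idx w = k @ [s]" "0 \<notin> set k" "1 \<le> s"
proof -
  have "word_idx w \<noteq> []" using assms by (intro word_idx_neq_Nil e1_in_set_if_in_H1)
  then obtain k s where ks: "word_idx w = k @ [s]" by (metis rev_exhaust)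
  with zero_notin_word_idx[of w] show ?thesis by (intro that[OF ks]) auto
qed

lemma Lword_0: "in_H1 w \<Longrightarrow> w \<noteq> [] \<Longrightarrow> Lword w 0 = 0"
  by (metis Li_snoc_0 Lword_eq_Li not_one_le_zero word_idx_snoc_cases)

text \<open>The forms \<open>dz/z\<close> and \<open>dz/(1 - z)\<close> attached to \<open>e\<^sub>0\<close> and \<open>e\<^sub>1\<close>: appending a letter
  to a word multiplies the derivative of its polylogarithm by the corresponding form.\<close>
definition letter_form :: "letter \<Rightarrow> complex \<Rightarrow> complex" where
  "letter_form a z = (case a of e0 \<Rightarrow> 1 / z | e1 \<Rightarrow> 1 / (1 - z))"

lemma Lword_snoc_has_field_derivative:
  assumes w: "in_H1 (w @ [a])" and z: "norm z < 1" "z \<noteq> 0"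
  shows "((\<lambda>z. Lword (w @ [a]) z) has_field_derivative letter_form a z * Lword w z) (at z)"
proof -
  have Lwa: "(\<lambda>z. Lword (w @ [a]) z) = Li (word_idx (w @ [a]))"
    using w by (simp add: fun_eq_iff Lword_eq_Li)
  show ?thesis
  proof (cases a)
    case e0
    with w have "w \<noteq> []" by (cases w) (auto simp: in_H1_def)
    with w have "in_H1 w" by (cases w) (auto simp: in_H1_def)
    then obtain k s where ks: "word_idx w = k @ [s]" "0 \<notin> set k" "1 \<le> s"
      using \<open>w \<noteq> []\<close> by (rule word_idx_snoc_cases)
    have "word_idx (w @ [a]) = k @ [Suc s]"
      using word_idx_snoc_e0[OF e1_in_set_if_in_H1] \<open>w \<noteq> []\<close> \<open>in_H1 w\<close> ks e0 by simp
    then show ?thesis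
      unfolding Lwa
      using Li_snoc_Suc_has_field_derivative_disk[OF ks(2,3) z] \<open>in_H1 w\<close> \<open>w \<noteq> []\<close> ks(1) e0
      by (simp add: Lword_eq_Li letter_form_def field_simps)
  next
    case e1
    have "Lword w z = Li (word_idx w) z"
      using in_H1_snoc_imp[OF w] by (cases "w = []") (simp_all add: Li_def Lword_eq_Li)
    then show ?thesis
      unfolding Lwa using Li_snoc_1_has_field_derivative_disk[OF zero_notin_word_idx z(1), of w] e1
      by (simp add: word_idx_snoc_e1 letter_form_def field_simps)
  qed
qed

lemma Lword_field_differentiable:
  assumes "in_H1 w" "norm z < 1"
  shows "(\<lambda>z. Lword w z) field_differentiable (at z)"
proof (cases "w = []")
  case False
  then obtain k s where ks: "word_idx w = k @ [s]" "0 \<notin> set k" "1 \<le> s"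
    using assms(1) by (elim word_idx_snoc_cases)
  then have "(\<lambda>z. Lword w z) = Li (k @ [s])"
    using assms(1) False by (simp add: fun_eq_iff Lword_eq_Li)
  then show ?thesis
    using Li_has_field_derivative_disk[OF ks(2,3) assms(2)] field_differentiable_def by auto
qed simp

lemma Lword_tendsto_radially:
  assumes "in_H1 w" "norm z = 1" "z \<noteq> 1"
  shows "((\<lambda>\<rho>. Lword w (of_real \<rho> * z)) \<longlongrightarrow> Lword w z) (at_left 1)"
proof (cases "w = []")
  case False
  then obtain k s where "word_idx w = k @ [s]" "0 \<notin> set k" "1 \<le> s"
    using assms(1) by (elim word_idx_snoc_cases)
  then show ?thesis
    using Li_snoc_tendsto_radially[of k s z] assms False by (simp add: Lword_eq_Li)
qed simp

lemma L_Nil [simp]: "L [] z = 0"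
  by (simp add: L_def)

lemma L_Cons [simp]: "L (w # ws) z = Lword w z + L ws z"
  by (simp add: L_def)

lemma L_append [simp]: "L (ws @ vs) z = L ws z + L vs z"
  by (simp add: L_def)

lemma L_mset_cong: "mset ws = mset vs \<Longrightarrow> L ws z = L vs z"
  unfolding L_def by (metis mset_map sum_mset_sum_list)

lemma L_map_snoc_has_field_derivative:
  assumes "\<forall>w\<in>set W. in_H1 (w @ [a])" "norm z < 1" "z \<noteq> 0"
  shows "((\<lambda>z. L (map (\<lambda>w. w @ [a]) W) z) has_field_derivative letter_form a z * L W z) (at z)"
  using assms(1)
proof (induction W)
  case (Cons w W)
  then show ?case
    using DERIV_add[OF Lword_snoc_has_field_derivative[OF _ assms(2,3)]] by (simp add: distrib_left)
next
  case Nil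
  have "(\<lambda>z. L [] z) = (\<lambda>_. 0)" by simp
  then show ?case by simp
qed

lemma L_field_differentiable:
  "\<forall>w\<in>set W. in_H1 w \<Longrightarrow> norm z < 1 \<Longrightarrow> (\<lambda>z. L W z) field_differentiable (at z)"
proof (induction W)
  case (Cons w W)
  then have "(\<lambda>z. Lword w z + L W z) field_differentiable (at z)"
    by (intro field_differentiable_add Lword_field_differentiable) auto
  moreover have "(\<lambda>z. L (w # W) z) = (\<lambda>z. Lword w z + L W z)" by simp
  ultimately show ?case by simp
next
  case Nil
  have "(\<lambda>z. L [] z) = (\<lambda>_. 0)" by simp
  then show ?case by simp
qed

lemma L_0: "\<forall>w\<in>set W. in_H1 w \<and> w \<noteq> [] \<Longrightarrow> L W 0 = 0"
  by (induction W) (simp_all add: Lword_0)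

lemma L_tendsto_radially:
  assumes "\<forall>w\<in>set W. in_H1 w" "norm z = 1" "z \<noteq> 1"
  shows "((\<lambda>\<rho>. L W (of_real \<rho> * z)) \<longlongrightarrow> L W z) (at_left 1)"
  using assms(1) by (induction W) (auto intro!: tendsto_add Lword_tendsto_radially assms(2,3))

lemma shuf_Nil2 [simp]: "shuf u [] = [u]"
  by (cases u) auto

lemma length_shuf: "w \<in> set (shuf u v) \<Longrightarrow> length w = length u + length v"
  by (induction u v arbitrary: w rule: shuf.induct) auto

lemma in_H1_shuf: "in_H1 u \<Longrightarrow> in_H1 v \<Longrightarrow> w \<in> set (shuf u v) \<Longrightarrow> in_H1 w"
  by (cases u; cases v) (auto simp: in_H1_def)

lemma shuf_nonempty_in_H1:
  assumes "in_H1 u" "in_H1 v" "u \<noteq> [] \<or> v \<noteq> []" "w \<in> set (shuf u v)"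
  shows "w \<noteq> [] \<and> in_H1 w"
proof
  show "w \<noteq> []" using length_shuf[OF assms(4)] assms(3) by auto
  show "in_H1 w" using in_H1_shuf[OF assms(1,2,4)] .
qed

lemma mset_shuf_singleton_snoc:
  "mset (shuf [a] (v @ [b])) = {#v @ [b, a]#} + mset (map (\<lambda>w. w @ [b]) (shuf [a] v))"
  by (induction v) (auto simp: image_mset.compositionality o_def add_ac)

lemma mset_shuf_snoc_singleton:
  "mset (shuf (u @ [a]) [b]) = mset (map (\<lambda>w. w @ [a]) (shuf u [b])) + {#u @ [a, b]#}"
  by (induction u) (auto simp: image_mset.compositionality o_def add_ac)

lemma mset_shuf_snoc:
  "mset (shuf (u @ [a]) (v @ [b])) =
     mset (map (\<lambda>w. w @ [a]) (shuf u (v @ [b]))) + mset (map (\<lambda>w. w @ [b]) (shuf (u @ [a]) v))"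
proof (induction u v rule: shuf.induct)
  case (1 v)
  then show ?case using mset_shuf_singleton_snoc[of a v b] by simp
next
  case (2 c u)
  then show ?case using mset_shuf_snoc_singleton[of "c # u" a b] by simp
next
  case (3 c u d v)
  then show ?case by (simp add: image_mset.compositionality o_def add_ac)
qed

lemma L_shuf_snoc:
  "L (shuf (u @ [a]) (v @ [b])) z =
     L (map (\<lambda>w. w @ [a]) (shuf u (v @ [b]))) z + L (map (\<lambda>w. w @ [b]) (shuf (u @ [a]) v)) z"
proof -
  have "mset (shuf (u @ [a]) (v @ [b])) =
          mset (map (\<lambda>w. w @ [a]) (shuf u (v @ [b])) @ map (\<lambda>w. w @ [b]) (shuf (u @ [a]) v))"
    using mset_shuf_snoc[of u a v b] by simp
  then show ?thesis by (metis L_append L_mset_cong)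
qed

lemma eq_on_disk_if_same_derivative:
  fixes f g :: "complex \<Rightarrow> complex"
  assumes "\<And>z. norm z < 1 \<Longrightarrow> f field_differentiable (at z)"
    and "\<And>z. norm z < 1 \<Longrightarrow> g field_differentiable (at z)"
    and "\<And>z. norm z < 1 \<Longrightarrow> z \<noteq> 0 \<Longrightarrow> (f has_field_derivative D z) (at z)"
    and "\<And>z. norm z < 1 \<Longrightarrow> z \<noteq> 0 \<Longrightarrow> (g has_field_derivative D z) (at z)"
    and "f 0 = g 0" "norm z < 1"
  shows "f z = g z"
proof -
  have "continuous_on (ball 0 1) (\<lambda>z. f z - g z)"
    using assms(1,2)
    by (intro continuous_at_imp_continuous_on ballI continuous_diff field_differentiable_imp_continuous_at)
       auto
  moreover have "\<forall>z\<in>ball 0 1 - {0}. ((\<lambda>z. f z - g z) has_field_derivative 0) (at z)"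
    using DERIV_diff[OF assms(3) assms(4)] by fastforce
  ultimately obtain c where "\<And>z. z \<in> ball 0 1 \<Longrightarrow> f z - g z = c"
    using DERIV_zero_connected_constant[of "ball 0 1" "{0}" "\<lambda>z. f z - g z"] by auto
  from this[of 0] this[of z] assms(5,6) show ?thesis by simp
qed

lemma L_shuf_disk:
  "in_H1 u \<Longrightarrow> in_H1 v \<Longrightarrow> norm z < 1 \<Longrightarrow> L (shuf u v) z = Lword u z * Lword v z"
proof (induction "length u + length v" arbitrary: u v z rule: less_induct)
  case less
  show ?case
  proof (cases "u = [] \<or> v = []")
    case False
    then obtain u' a v' b where u: "u = u' @ [a]" and v: "v = v' @ [b]" by (metis rev_exhaust)
    have H1: "in_H1 (u' @ [a])" "in_H1 (v' @ [b])" using less.prems(1,2) u v by simp_all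
    have H1': "in_H1 u'" "in_H1 v'" using in_H1_snoc_imp[OF H1(1)] in_H1_snoc_imp[OF H1(2)] .
    have IH: "L (shuf u' v) z = Lword u' z * Lword v z" "L (shuf u v') z = Lword u z * Lword v' z"
      if "norm z < 1" for z
      using less.hyps[of u' v z] less.hyps[of u v' z] H1' less.prems(1,2) that u v by simp_all
    have split: "L (shuf u v) z = L (map (\<lambda>w. w @ [a]) (shuf u' v)) z + L (map (\<lambda>w. w @ [b]) (shuf u v')) z"
      for z
      using L_shuf_snoc[of u' a v' b] u v by simp
    have snoc_H1: "\<forall>w\<in>set (shuf u' v). in_H1 (w @ [a])" "\<forall>w\<in>set (shuf u v'). in_H1 (w @ [b])"
      using shuf_nonempty_in_H1[OF H1'(1) less.prems(2)] shuf_nonempty_in_H1[OF less.prems(1) H1'(2)]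
        False in_H1_append by blast+
    show ?thesis
    proof (rule eq_on_disk_if_same_derivative[OF _ _ _ _ _ \<open>norm z < 1\<close>])
      show "(\<lambda>z. L (shuf u v) z) field_differentiable (at z)" if "norm z < 1" for z
        using less.prems(1,2) that by (intro L_field_differentiable) (auto dest: in_H1_shuf)
      show "(\<lambda>z. Lword u z * Lword v z) field_differentiable (at z)" if "norm z < 1" for z
        using less.prems(1,2) that by (intro field_differentiable_mult Lword_field_differentiable)
      show "((\<lambda>z. L (shuf u v) z) has_field_derivative
              letter_form a z * (Lword u' z * Lword v z) + letter_form b z * (Lword u z * Lword v' z)) (at z)"
        if "norm z < 1" "z \<noteq> 0" for z
        using DERIV_add[OF L_map_snoc_has_field_derivative[OF snoc_H1(1) that]
                           L_map_snoc_has_field_derivative[OF snoc_H1(2) that]]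
        unfolding split IH[OF that(1)] .
      show "((\<lambda>z. Lword u z * Lword v z) has_field_derivative
              letter_form a z * (Lword u' z * Lword v z) + letter_form b z * (Lword u z * Lword v' z)) (at z)"
        if "norm z < 1" "z \<noteq> 0" for z
        using DERIV_mult[OF Lword_snoc_has_field_derivative[OF H1(1) that]
                            Lword_snoc_has_field_derivative[OF H1(2) that]] u v
        by (simp add: algebra_simps)
      show "L (shuf u v) 0 = Lword u 0 * Lword v 0"
        using shuf_nonempty_in_H1[OF less.prems(1,2)] less.prems(1) False
        by (simp add: L_0 Lword_0)
    qed
  qed auto
qed

lemma L_shuf_circle:
  assumes "in_H1 u" "in_H1 v" "norm z = 1" "z \<noteq> 1"
  shows "L (shuf u v) z = Lword u z * Lword v z"
proof (rule tendsto_unique[OF trivial_limit_at_left_real])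
  show "((\<lambda>\<rho>. L (shuf u v) (of_real \<rho> * z)) \<longlongrightarrow> L (shuf u v) z) (at_left 1)"
    using assms by (intro L_tendsto_radially) (auto dest: in_H1_shuf)
  have "((\<lambda>\<rho>. Lword u (of_real \<rho> * z) * Lword v (of_real \<rho> * z))
          \<longlongrightarrow> Lword u z * Lword v z) (at_left 1)"
    using assms by (intro tendsto_mult Lword_tendsto_radially)
  moreover have "\<forall>\<^sub>F \<rho> in at_left 1. \<rho> \<in> {0<..<1::real}"
    by (rule eventually_at_left_real) simp
  then have "\<forall>\<^sub>F \<rho> in at_left 1.
               Lword u (of_real \<rho> * z) * Lword v (of_real \<rho> * z) = L (shuf u v) (of_real \<rho> * z)"
    by eventually_elim (use assms in \<open>simp add: L_shuf_disk norm_mult\<close>)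
  ultimately show "((\<lambda>\<rho>. L (shuf u v) (of_real \<rho> * z)) \<longlongrightarrow> Lword u z * Lword v z) (at_left 1)"
    by (rule Lim_transform_eventually)
qed

lemma L_shufL:
  assumes "\<forall>w\<in>set W. in_H1 w" "\<forall>w\<in>set V. in_H1 w"
    and shuf: "\<And>u v. in_H1 u \<Longrightarrow> in_H1 v \<Longrightarrow> L (shuf u v) z = Lword u z * Lword v z"
  shows "L (shufL W V) z = L W z * L V z"
  using assms(1)
proof (induction W)
  case (Cons w W)
  have "L (concat (map (shuf w) V)) z = Lword w z * L V z"
    using assms(2) Cons.prems by (induction V) (auto simp: shuf distrib_left)
  then show ?case using Cons by (simp add: shufL_def distrib_right)
qed (simp add: shufL_def)

lemma e1pow_0: "e1pow 0 = [[]]"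
  by (simp add: e1pow_def)

lemma e1pow_Suc: "e1pow (Suc r) = shufL [[e1]] (e1pow r)"
  by (simp add: e1pow_def)

lemma in_H1_e1pow: "w \<in> set (e1pow r) \<Longrightarrow> in_H1 w"
  by (induction r arbitrary: w)
     (auto simp: e1pow_0 e1pow_Suc shufL_def in_H1_def dest: in_H1_shuf[rotated 2])

lemma length_e1pow: "w \<in> set (e1pow r) \<Longrightarrow> length w = r"
  by (induction r arbitrary: w) (auto simp: e1pow_0 e1pow_Suc shufL_def dest: length_shuf)

lemma L_e1pow_circle:
  assumes "norm z = 1" "z \<noteq> 1"
  shows "L (e1pow r) z = Li [1] z ^ r"
proof (induction r)
  case (Suc r)
  have "L (e1pow (Suc r)) z = L [[e1]] z * L (e1pow r) z"
    unfolding e1pow_Suc using assms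
    by (intro L_shufL L_shuf_circle) (auto simp: in_H1_def dest: in_H1_e1pow)
  with Suc show ?case by (simp add: Lword_def)
qed (simp add: e1pow_0)

section \<open>Differentiating along the unit circle\<close>

declare wjr.simps [simp del]

lemma wjr_Nil [simp]: "wjr [] r = [[]]" "wjr j [] = [[]]"
  by (subst wjr.simps; simp)+

lemma wjr_snoc:
  "wjr (j @ [t]) (r @ [y]) = map (\<lambda>u. u @ replicate (Suc t) e0) (shufL (wjr j r) (e1pow y))"
  by (subst wjr.simps) simp

lemma wjr_snoc_eq_map_snoc_e0:
  "wjr (j @ [t]) (r @ [y]) = map (\<lambda>u. u @ [e0]) (map (\<lambda>u. u @ replicate t e0) (shufL (wjr j r) (e1pow y)))"
  by (simp add: wjr_snoc replicate_append_same[symmetric])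

lemma set_shufL: "w \<in> set (shufL W V) \<longleftrightarrow> (\<exists>u\<in>set W. \<exists>v\<in>set V. w \<in> set (shuf u v))"
  by (auto simp: shufL_def)

lemma shufL_wjr_e1pow_nonempty_in_H1:
  "length j = length r \<Longrightarrow> hd (r @ [y]) \<noteq> 0 \<Longrightarrow> w \<in> set (shufL (wjr j r) (e1pow y))
    \<Longrightarrow> w \<noteq> [] \<and> in_H1 w"
proof (induction j arbitrary: r y w rule: rev_induct)
  case Nil
  then have "r = []" "y \<noteq> 0" by simp_all
  with Nil.prems(3) have "w \<in> set (e1pow y)" by (simp add: set_shufL)
  with \<open>y \<noteq> 0\<close> show ?case using length_e1pow in_H1_e1pow by fastforce
next
  case (snoc t j)
  obtain r' x where r: "r = r' @ [x]"
    using snoc.prems(1) by (cases r rule: rev_exhaust) auto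
  from snoc.prems(3) obtain v e where v: "v \<in> set (wjr (j @ [t]) r)" and e: "e \<in> set (e1pow y)"
    and w: "w \<in> set (shuf v e)"
    by (auto simp: set_shufL)
  from v obtain u where u: "u \<in> set (shufL (wjr j r') (e1pow x))" and vu: "v = u @ replicate (Suc t) e0"
    by (auto simp: r wjr_snoc)
  have "hd (r' @ [x]) = hd (r @ [y])" by (cases r') (simp_all add: r)
  then have "u \<noteq> [] \<and> in_H1 u"
    using snoc.IH[OF _ _ u] snoc.prems(1,2) r by simp
  then have "v \<noteq> [] \<and> in_H1 v" by (simp add: vu in_H1_append)
  then show ?case using shuf_nonempty_in_H1[OF _ in_H1_e1pow[OF e] _ w] by blast
qed

lemma wjr_in_H1:
  assumes "length j = length r" "r = [] \<or> hd r \<noteq> 0" "w \<in> set (wjr j r)"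
  shows "in_H1 w"
proof (cases r rule: rev_exhaust)
  case (snoc r' y)
  moreover obtain j' t where "j = j' @ [t]"
    using assms(1) snoc by (cases j rule: rev_exhaust) auto
  ultimately obtain u where "u \<in> set (shufL (wjr j' r') (e1pow y))" "w = u @ replicate (Suc t) e0"
    using assms(3) by (auto simp: wjr_snoc)
  then show ?thesis
    using shufL_wjr_e1pow_nonempty_in_H1[of j' r' y u] assms(1,2) snoc \<open>j = j' @ [t]\<close>
    by (simp add: in_H1_append)
qed (use assms in simp)

lemma Lword_snoc_e0_has_vector_derivative_circle:
  assumes "in_H1 u" "u \<noteq> []" "0 < \<sigma>" "\<sigma> < 2 * pi"
  shows "((\<lambda>t. Lword (u @ [e0]) (exp (\<i> * of_real t))) has_vector_derivative
           \<i> * Lword u (exp (\<i> * of_real \<sigma>))) (at \<sigma>)"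
proof -
  obtain k s where ks: "word_idx u = k @ [s]" "0 \<notin> set k" "1 \<le> s"
    using assms(1,2) by (rule word_idx_snoc_cases)
  have "word_idx (u @ [e0]) = k @ [Suc s]"
    using word_idx_snoc_e0[OF e1_in_set_if_in_H1[OF assms(1,2)]] ks(1) by simp
  then show ?thesis
    using Li_snoc_Suc_has_vector_derivative_circle[OF ks(2,3) assms(3,4)] assms(1,2) ks(1)
    by (simp add: Lword_eq_Li in_H1_append)
qed

lemma L_map_snoc_e0_has_vector_derivative_circle:
  assumes "\<forall>u\<in>set U. u \<noteq> [] \<and> in_H1 u" "0 < \<sigma>" "\<sigma> < 2 * pi"
  shows "((\<lambda>t. L (map (\<lambda>u. u @ [e0]) U) (exp (\<i> * of_real t))) has_vector_derivative
           \<i> * L U (exp (\<i> * of_real \<sigma>))) (at \<sigma>)"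
  using assms(1)
proof (induction U)
  case (Cons u U)
  then show ?case
    using has_vector_derivative_add[OF Lword_snoc_e0_has_vector_derivative_circle[OF _ _ assms(2,3)]]
    by (simp add: distrib_left)
qed simp

lemma L_wjr_snoc_has_vector_derivative_circle:
  assumes "length j = length r" "hd (r @ [y]) \<noteq> 0" "0 < \<sigma>" "\<sigma> < 2 * pi"
  shows "((\<lambda>s. L (wjr (j @ [t]) (r @ [y])) (exp (\<i> * of_real s))) has_vector_derivative
           \<i> * L (map (\<lambda>u. u @ replicate t e0) (shufL (wjr j r) (e1pow y))) (exp (\<i> * of_real \<sigma>)))
         (at \<sigma>)"
  unfolding wjr_snoc_eq_map_snoc_e0
proof (rule L_map_snoc_e0_has_vector_derivative_circle[OF _ assms(3,4)])
  show "\<forall>u\<in>set (map (\<lambda>u. u @ replicate t e0) (shufL (wjr j r) (e1pow y))). u \<noteq> [] \<and> in_H1 u"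
    using shufL_wjr_e1pow_nonempty_in_H1[OF assms(1,2)] by (auto intro: in_H1_append)
qed

text \<open>The identity \<open>(Q - t) c\<^sub>Q(t) = - c\<^sub>Q(t + 1)\<close> (\<open>tele_coeff_mult_diff\<close>) makes the
  derivatives of the powers of \<open>i\<sigma>\<close> cancel telescopically.\<close>
definition tele_coeff :: "nat \<Rightarrow> nat \<Rightarrow> real" where
  "tele_coeff Q t = (-1) ^ t * fact Q / fact (Q - t)"

lemma tele_coeff_0 [simp]: "tele_coeff Q 0 = 1"
  by (simp add: tele_coeff_def)

lemma tele_coeff_mult_diff:
  assumes "t < Q"
  shows "tele_coeff Q t * real (Q - t) = - tele_coeff Q (Suc t)"
proof -
  have "Q - t = Suc (Q - Suc t)" using assms by simp
  then have f: "(fact (Q - t) :: real) = real (Q - t) * fact (Q - Suc t)" by (simp add: fact_Suc)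
  have "Q - t > 0" using assms by simp
  then show ?thesis unfolding tele_coeff_def f by (simp add: field_simps)
qed

lemma i_power_has_vector_derivative:
  "((\<lambda>s. (\<i> * of_real s) ^ N) has_vector_derivative of_nat N * \<i> * (\<i> * of_real \<sigma>) ^ (N - 1)) (at \<sigma>)"
proof -
  have "((\<lambda>w. (\<i> * w) ^ N) has_field_derivative of_nat N * \<i> * (\<i> * w) ^ (N - 1)) (at w)" for w
    by (auto intro!: derivative_eq_intros simp: mult_ac)
  from has_vector_derivative_real_field[OF this, of "of_real \<sigma>" UNIV] show ?thesis by simp
qed

lemma sum_atMost_add_telescope:
  fixes u v :: "nat \<Rightarrow> 'a::ab_group_add"
  assumes "\<And>t. t < Q \<Longrightarrow> v t = - u (Suc t)" and "v Q = 0"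
  shows "(\<Sum>t\<le>Q. u t + v t) = u 0"
proof (cases Q)
  case (Suc Q')
  have "(\<Sum>t\<le>Q. u t + v t) = (\<Sum>t\<le>Q. u t) + (\<Sum>t\<le>Q. v t)"
    by (simp add: sum.distrib)
  also have "(\<Sum>t\<le>Q. u t) = u 0 + (\<Sum>t\<le>Q'. u (Suc t))"
    unfolding Suc by (rule sum.atMost_Suc_shift)
  also have "(\<Sum>t\<le>Q. v t) = (\<Sum>t\<le>Q'. - u (Suc t)) + v Q"
    unfolding Suc using assms(1) Suc by simp
  finally show ?thesis by (simp add: assms(2) sum_negf)
qed (use assms(2) in simp)

lemma telescoping_has_vector_derivative:
  fixes X :: "nat \<Rightarrow> real \<Rightarrow> complex"
  assumes Suc: "\<And>t. (X (Suc t) has_vector_derivative \<i> * X t \<sigma>) (at \<sigma>)"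
    and 0: "(X 0 has_vector_derivative \<i> * Y) (at \<sigma>)"
  shows "((\<lambda>s. \<Sum>t\<le>Q. of_real (tele_coeff Q t) * (\<i> * of_real s) ^ (Q - t) * X t s)
           has_vector_derivative \<i> * (\<i> * of_real \<sigma>) ^ Q * Y) (at \<sigma>)"
proof -
  define X' where "X' t = (if t = 0 then \<i> * Y else \<i> * X (t - 1) \<sigma>)" for t
  have X': "(X t has_vector_derivative X' t) (at \<sigma>)" for t
    using Suc[of "t - 1"] 0 by (cases t) (simp_all add: X'_def)
  define u where "u t = of_real (tele_coeff Q t) * ((\<i> * of_real \<sigma>) ^ (Q - t) * X' t)" for t
  define v where "v t = of_real (tele_coeff Q t) *
                          (of_nat (Q - t) * \<i> * (\<i> * of_real \<sigma>) ^ (Q - t - 1) * X t \<sigma>)" for t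
  have "((\<lambda>s. \<Sum>t\<le>Q. of_real (tele_coeff Q t) * (\<i> * of_real s) ^ (Q - t) * X t s)
          has_vector_derivative (\<Sum>t\<le>Q. u t + v t)) (at \<sigma>)"
  proof (rule has_vector_derivative_sum)
    fix t
    show "((\<lambda>s. of_real (tele_coeff Q t) * (\<i> * of_real s) ^ (Q - t) * X t s)
            has_vector_derivative u t + v t) (at \<sigma>)"
      using has_vector_derivative_mult_right[OF has_vector_derivative_mult
              [OF i_power_has_vector_derivative[of "Q - t"] X'[of t]], of "of_real (tele_coeff Q t)"]
      by (simp add: u_def v_def distrib_left mult.assoc)
  qed
  moreover have "(\<Sum>t\<le>Q. u t + v t) = u 0"
  proof (rule sum_atMost_add_telescope)
    show "v t = - u (Suc t)" if "t < Q" for t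
    proof -
      have "v t = of_real (tele_coeff Q t * real (Q - t)) * (\<i> * (\<i> * of_real \<sigma>) ^ (Q - Suc t) * X t \<sigma>)"
        by (simp add: v_def mult_ac)
      then show ?thesis by (simp add: tele_coeff_mult_diff[OF that] u_def X'_def mult_ac)
    qed
  qed (simp add: v_def)
  moreover have "u 0 = \<i> * (\<i> * of_real \<sigma>) ^ Q * Y"
    by (simp add: u_def X'_def)
  ultimately show ?thesis by simp
qed

section \<open>The functions \<open>f\<^sub>q\<^sup>r\<close>\<close>

text \<open>With \<open>c = |q'| + n'\<close>, \<open>shift_hd c q''\<close> is the index \<open>q\<close>-bar of the definition of \<open>f\<^sub>q\<^sup>r\<close>.\<close>
definition shift_hd :: "nat \<Rightarrow> nat list \<Rightarrow> nat list" where
  "shift_hd c q = (case q of [] \<Rightarrow> [] | x # q' \<Rightarrow> (c + x) # q')"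

definition idx_below :: "nat list \<Rightarrow> nat list set" where
  "idx_below q = {j. length j = length q \<and> idx_preceq j q}"

text \<open>The sum over \<open>j\<close> in the definition of \<open>f\<^sub>q\<^sup>r\<close>, so that \<open>f\<^sub>q\<^sup>r = B\<^bsub>q'\<^esub> \<cdot> fqr_core (|q'| + n') q'' r''\<close>
  (\<open>fqr_replicate_0_append\<close>).\<close>
definition fqr_core :: "nat \<Rightarrow> nat list \<Rightarrow> nat list \<Rightarrow> real \<Rightarrow> complex" where
  "fqr_core c q r \<sigma> =
     (\<Sum>j\<in>idx_below (shift_hd c q). of_real (Cc (shift_hd c q) j)
        * (\<i> * of_real \<sigma>) ^ (c + sum_list q - sum_list j) * L (wjr j r) (exp (\<i> * of_real \<sigma>)))"

lemma shift_hd_Nil [simp]: "shift_hd c [] = []"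
  by (simp add: shift_hd_def)

lemma shift_hd_snoc: "shift_hd c (q @ [x]) = shift_hd c q @ [if q = [] then c + x else x]"
  by (cases q) (simp_all add: shift_hd_def)

lemma sum_list_shift_hd: "sum_list (shift_hd c q) = (if q = [] then 0 else c + sum_list q)"
  by (cases q) (simp_all add: shift_hd_def)

lemma length_shift_hd [simp]: "length (shift_hd c q) = length q"
  by (cases q) (simp_all add: shift_hd_def)

lemma idx_below_Nil [simp]: "idx_below [] = {[]}"
  by (auto simp: idx_below_def idx_preceq_def)

lemma idx_preceq_snoc:
  assumes "length j = length q"
  shows "idx_preceq (j @ [t]) (q @ [x]) \<longleftrightarrow> idx_preceq j q \<and> sum_list j + t \<le> sum_list q + x"
proof -
  have "idx_preceq (j @ [t]) (q @ [x]) \<longleftrightarrow>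
          (\<forall>s\<le>length q. sum_list (take s j) \<le> sum_list (take s q)) \<and> sum_list j + t \<le> sum_list q + x"
    using assms by (auto simp: idx_preceq_def le_Suc_eq)
  then show ?thesis by (simp add: idx_preceq_def)
qed

lemma sum_list_le_if_idx_below: "j \<in> idx_below q \<Longrightarrow> sum_list j \<le> sum_list q"
  unfolding idx_below_def idx_preceq_def by (metis (mono_tags, lifting) mem_Collect_eq order_refl take_all)

lemma idx_below_snoc:
  "idx_below (q @ [x]) = (\<lambda>(j, t). j @ [t]) ` (SIGMA j:idx_below q. {..sum_list (q @ [x]) - sum_list j})"
proof (intro set_eqI iffI)
  fix i assume i: "i \<in> idx_below (q @ [x])"
  then obtain j t where jt: "i = j @ [t]"
    by (cases i rule: rev_exhaust) (auto simp: idx_below_def)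
  with i have "length j = length q" by (simp add: idx_below_def)
  with i jt show "i \<in> (\<lambda>(j, t). j @ [t]) ` (SIGMA j:idx_below q. {..sum_list (q @ [x]) - sum_list j})"
    by (auto simp: idx_below_def idx_preceq_snoc intro!: image_eqI[of _ _ "(j, t)"])
next
  fix i assume "i \<in> (\<lambda>(j, t). j @ [t]) ` (SIGMA j:idx_below q. {..sum_list (q @ [x]) - sum_list j})"
  then obtain j t where "i = j @ [t]" "j \<in> idx_below q" "t \<le> sum_list (q @ [x]) - sum_list j"
    by auto
  moreover from this have "sum_list j \<le> sum_list q" by (simp add: sum_list_le_if_idx_below)
  ultimately show "i \<in> idx_below (q @ [x])"
    by (auto simp: idx_below_def idx_preceq_snoc)
qed

lemma finite_idx_below: "finite (idx_below q)"
  by (induction q rule: rev_induct) (simp_all add: idx_below_snoc)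

declare Cc.simps [simp del] Bc.simps [simp del]

lemma Cc_snoc:
  "Cc (q @ [x]) (j @ [t]) = tele_coeff (sum_list (q @ [x]) - sum_list j) t * Cc q j"
  by (subst Cc.simps) (simp add: tele_coeff_def)

lemma Cc_Nil [simp]: "Cc [] j = 1"
  by (subst Cc.simps) simp

lemma Bc_snoc: "Bc (q @ [x]) = Bc q / (real (sum_list (q @ [x])) + real (length (q @ [x])))"
  by (subst Bc.simps) simp

lemma fqr_core_Nil: "fqr_core c [] [] \<sigma> = (\<i> * of_real \<sigma>) ^ c"
  by (simp add: fqr_core_def)

lemma fqr_core_snoc:
  fixes c x :: nat and q :: "nat list"
  defines "Q j \<equiv> c + sum_list q + x - sum_list j"
  shows "fqr_core c (q @ [x]) r s =
    (\<Sum>j\<in>idx_below (shift_hd c q). of_real (Cc (shift_hd c q) j) *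
      (\<Sum>t\<le>Q j. of_real (tele_coeff (Q j) t) * (\<i> * of_real s) ^ (Q j - t)
                  * L (wjr (j @ [t]) r) (exp (\<i> * of_real s))))"
proof -
  define p where "p = shift_hd c q"
  define x' where "x' = (if q = [] then c + x else x)"
  have p: "shift_hd c (q @ [x]) = p @ [x']" "sum_list (p @ [x']) = c + sum_list q + x"
    by (simp_all add: p_def x'_def shift_hd_snoc sum_list_shift_hd)
  let ?f = "\<lambda>i. of_real (Cc (p @ [x']) i) * (\<i> * of_real s) ^ (c + sum_list (q @ [x]) - sum_list i)
                * L (wjr i r) (exp (\<i> * of_real s))"
  have "fqr_core c (q @ [x]) r s = sum ?f ((\<lambda>(j, t). j @ [t]) ` (SIGMA j:idx_below p. {..Q j}))"
    unfolding fqr_core_def p(1) idx_below_snoc p(2) by (simp add: Q_def)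
  also have "\<dots> = sum (?f \<circ> (\<lambda>(j, t). j @ [t])) (SIGMA j:idx_below p. {..Q j})"
    by (rule sum.reindex) (auto simp: inj_on_def)
  also have "\<dots> = (\<Sum>(j, t)\<in>(SIGMA j:idx_below p. {..Q j}). ?f (j @ [t]))"
    by (intro sum.cong refl) auto
  also have "\<dots> = (\<Sum>j\<in>idx_below p. \<Sum>t\<le>Q j. ?f (j @ [t]))"
    by (rule sum.Sigma[symmetric]) (simp_all add: finite_idx_below)
  also have "\<dots> = (\<Sum>j\<in>idx_below p. of_real (Cc p j) *
      (\<Sum>t\<le>Q j. of_real (tele_coeff (Q j) t) * (\<i> * of_real s) ^ (Q j - t)
                  * L (wjr (j @ [t]) r) (exp (\<i> * of_real s))))"
    unfolding sum_distrib_left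
    by (intro sum.cong refl) (simp add: Cc_snoc[of p x', unfolded p(2)] Q_def diff_diff_left add.assoc mult_ac)
  finally show ?thesis by (simp add: p_def)
qed

lemma sum_list_le_if_idx_below_shift_hd:
  "j \<in> idx_below (shift_hd c q) \<Longrightarrow> sum_list j \<le> c + sum_list q"
  using sum_list_le_if_idx_below[of j "shift_hd c q"] by (simp add: sum_list_shift_hd split: if_splits)

lemma telescoping_sum_L_wjr_has_vector_derivative:
  assumes lj: "length j = length r" and hd: "hd (r @ [y]) \<noteq> 0" and \<sigma>: "0 < \<sigma>" "\<sigma> < 2 * pi"
  defines "z \<equiv> exp (\<i> * of_real \<sigma>)"
  shows "((\<lambda>s. \<Sum>t\<le>Q. of_real (tele_coeff Q t) * (\<i> * of_real s) ^ (Q - t)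
                         * L (wjr (j @ [t]) (r @ [y])) (exp (\<i> * of_real s)))
           has_vector_derivative \<i> * (\<i> * of_real \<sigma>) ^ Q * (L (wjr j r) z * Li [1] z ^ y)) (at \<sigma>)"
proof (rule telescoping_has_vector_derivative)
  have z: "norm z = 1" "z \<noteq> 1" using exp_i_neq_1[OF \<sigma>] by (simp_all add: z_def)
  show "((\<lambda>s. L (wjr (j @ [Suc t]) (r @ [y])) (exp (\<i> * of_real s))) has_vector_derivative
          \<i> * L (wjr (j @ [t]) (r @ [y])) (exp (\<i> * of_real \<sigma>))) (at \<sigma>)" for t
    using L_wjr_snoc_has_vector_derivative_circle[OF lj hd \<sigma>, of "Suc t"] by (simp add: wjr_snoc)
  have "L (shufL (wjr j r) (e1pow y)) z = L (wjr j r) z * L (e1pow y) z"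
  proof (rule L_shufL)
    show "\<forall>w\<in>set (wjr j r). in_H1 w"
      using wjr_in_H1[OF lj] hd by (cases r) auto
    show "\<forall>w\<in>set (e1pow y). in_H1 w" using in_H1_e1pow by blast
  qed (rule L_shuf_circle[OF _ _ z])
  then show "((\<lambda>s. L (wjr (j @ [0]) (r @ [y])) (exp (\<i> * of_real s))) has_vector_derivative
               \<i> * (L (wjr j r) z * Li [1] z ^ y)) (at \<sigma>)"
    using L_wjr_snoc_has_vector_derivative_circle[OF lj hd \<sigma>, of 0] L_e1pow_circle[OF z]
    by (simp add: z_def)
qed

lemma fqr_core_snoc_has_vector_derivative:
  assumes len: "length q = length r" and hd: "hd (r @ [y]) \<noteq> 0" and \<sigma>: "0 < \<sigma>" "\<sigma> < 2 * pi"
  shows "((\<lambda>s. fqr_core c (q @ [x]) (r @ [y]) s) has_vector_derivative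
           \<i> * (\<i> * of_real \<sigma>) ^ x * Li [1] (exp (\<i> * of_real \<sigma>)) ^ y * fqr_core c q r \<sigma>) (at \<sigma>)"
proof -
  define z where "z = exp (\<i> * of_real \<sigma>)"
  define Q where "Q j = c + sum_list q + x - sum_list j" for j
  have F: "fqr_core c (q @ [x]) (r @ [y]) s =
    (\<Sum>j\<in>idx_below (shift_hd c q). of_real (Cc (shift_hd c q) j) *
      (\<Sum>t\<le>Q j. of_real (tele_coeff (Q j) t) * (\<i> * of_real s) ^ (Q j - t)
                  * L (wjr (j @ [t]) (r @ [y])) (exp (\<i> * of_real s))))" for s
    by (simp add: fqr_core_snoc Q_def)
  have inner: "((\<lambda>s. \<Sum>t\<le>Q j. of_real (tele_coeff (Q j) t) * (\<i> * of_real s) ^ (Q j - t)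
                                * L (wjr (j @ [t]) (r @ [y])) (exp (\<i> * of_real s)))
                has_vector_derivative \<i> * (\<i> * of_real \<sigma>) ^ Q j * (L (wjr j r) z * Li [1] z ^ y)) (at \<sigma>)"
    if "j \<in> idx_below (shift_hd c q)" for j
    using that len unfolding z_def
    by (intro telescoping_sum_L_wjr_has_vector_derivative hd \<sigma>) (simp add: idx_below_def)
  have "((\<lambda>s. fqr_core c (q @ [x]) (r @ [y]) s) has_vector_derivative
          (\<Sum>j\<in>idx_below (shift_hd c q). of_real (Cc (shift_hd c q) j) *
             (\<i> * (\<i> * of_real \<sigma>) ^ Q j * (L (wjr j r) z * Li [1] z ^ y)))) (at \<sigma>)"
    unfolding F by (intro has_vector_derivative_sum has_vector_derivative_mult_right inner)
  also have "(\<Sum>j\<in>idx_below (shift_hd c q). of_real (Cc (shift_hd c q) j) *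
               (\<i> * (\<i> * of_real \<sigma>) ^ Q j * (L (wjr j r) z * Li [1] z ^ y)))
             = \<i> * (\<i> * of_real \<sigma>) ^ x * Li [1] z ^ y * fqr_core c q r \<sigma>"
    unfolding fqr_core_def sum_distrib_left
  proof (intro sum.cong refl)
    fix j assume "j \<in> idx_below (shift_hd c q)"
    then have "Q j = x + (c + sum_list q - sum_list j)"
      using sum_list_le_if_idx_below_shift_hd[of j c q] by (simp add: Q_def)
    then show "of_real (Cc (shift_hd c q) j) * (\<i> * (\<i> * of_real \<sigma>) ^ Q j * (L (wjr j r) z * Li [1] z ^ y))
      = \<i> * (\<i> * of_real \<sigma>) ^ x * Li [1] z ^ y * (of_real (Cc (shift_hd c q) j)
          * (\<i> * of_real \<sigma>) ^ (c + sum_list q - sum_list j) * L (wjr j r) (exp (\<i> * of_real \<sigma>)))"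
      by (simp add: power_add z_def mult_ac)
  qed
  finally show ?thesis by (simp add: z_def)
qed

lemma replicate_0_append_cases:
  fixes r :: "nat list"
  obtains n' r'' where "r = replicate n' 0 @ r''" "r'' = [] \<or> hd r'' \<noteq> 0"
proof
  show "r = replicate (length (takeWhile (\<lambda>x. x = 0) r)) 0 @ dropWhile (\<lambda>x. x = 0) r"
    by (metis (mono_tags) replicate_length_same set_takeWhileD takeWhile_dropWhile_id)
  show "dropWhile (\<lambda>x. x = 0) r = [] \<or> hd (dropWhile (\<lambda>x. x = 0) r) \<noteq> 0"
    using hd_dropWhile by blast
qed

lemma fqr_replicate_0_append:
  assumes "length q' = n'" "r'' = [] \<or> hd r'' \<noteq> 0"
  shows "fqr (q' @ q'') (replicate n' 0 @ r'') \<sigma> = of_real (Bc q') * fqr_core (sum_list q' + n') q'' r'' \<sigma>"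
proof -
  have "takeWhile (\<lambda>x. x = 0) (replicate n' 0 @ r'') = replicate n' 0 @ takeWhile (\<lambda>x. x = 0) r''"
    by (rule takeWhile_append2) simp
  moreover have "dropWhile (\<lambda>x. x = 0) (replicate n' 0 @ r'') = dropWhile (\<lambda>x. x = 0) r''"
    by (rule dropWhile_append2) simp
  moreover have "takeWhile (\<lambda>x. x = 0) r'' = []" "dropWhile (\<lambda>x. x = 0) r'' = r''"
    using assms(2) by (cases r''; simp)+
  ultimately show ?thesis
    using assms(1)
    by (cases q'') (simp_all add: fqr_def fqr_core_def idx_below_def shift_hd_def Let_def add_ac)
qed

lemma fqr_replicate_0:
  "length q = n \<Longrightarrow> fqr q (replicate n 0) \<sigma> = of_real (Bc q) * (\<i> * of_real \<sigma>) ^ (sum_list q + n)"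
  using fqr_replicate_0_append[of q n "[]" "[]" \<sigma>] by (simp add: fqr_core_Nil)

lemma fqr_replicate_0_has_vector_derivative:
  assumes "length q = n"
  shows "((\<lambda>s. fqr (q @ [x]) (replicate n 0 @ [0]) s) has_vector_derivative
           \<i> * (\<i> * of_real \<sigma>) ^ x * fqr q (replicate n 0) \<sigma>) (at \<sigma>)"
proof -
  define N where "N = sum_list q + x + Suc n"
  have "replicate n 0 @ [0] = replicate (Suc n) (0::nat)" by (simp add: replicate_append_same)
  then have f: "fqr (q @ [x]) (replicate n 0 @ [0]) s = of_real (Bc (q @ [x])) * (\<i> * of_real s) ^ N" for s
    using fqr_replicate_0[of "q @ [x]" "Suc n"] assms by (simp add: N_def)
  have deriv: "((\<lambda>s. of_real (Bc (q @ [x])) * (\<i> * of_real s) ^ N) has_vector_derivative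
                 of_real (Bc (q @ [x])) * (of_nat N * \<i> * (\<i> * of_real \<sigma>) ^ (N - 1))) (at \<sigma>)"
    by (intro has_vector_derivative_mult_right i_power_has_vector_derivative)
  have BcN: "of_real (Bc (q @ [x])) * (of_nat N :: complex) = of_real (Bc q)"
  proof -
    have "real (sum_list (q @ [x])) + real (length (q @ [x])) = real N" using assms by (simp add: N_def)
    then have "Bc (q @ [x]) = Bc q / real N" by (simp add: Bc_snoc)
    then have "Bc (q @ [x]) * real N = Bc q" by (simp add: N_def)
    then show ?thesis by (metis of_real_mult of_real_of_nat_eq)
  qed
  have "N - 1 = x + (sum_list q + n)" by (simp add: N_def)
  then have "of_real (Bc (q @ [x])) * (of_nat N * \<i> * (\<i> * of_real \<sigma>) ^ (N - 1))
             = \<i> * (\<i> * of_real \<sigma>) ^ x * (of_real (Bc q) * (\<i> * of_real \<sigma>) ^ (sum_list q + n))"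
    by (simp add: power_add BcN[symmetric] mult_ac)
  also have "\<dots> = \<i> * (\<i> * of_real \<sigma>) ^ x * fqr q (replicate n 0) \<sigma>"
    using assms by (simp add: fqr_replicate_0)
  finally show ?thesis using deriv by (simp only: f)
qed

lemma fqr_replicate_0_append_has_vector_derivative:
  assumes "length q' = n'" "length q = length r" "hd (r @ [y]) \<noteq> 0" "0 < \<sigma>" "\<sigma> < 2 * pi"
  shows "((\<lambda>s. fqr (q' @ q @ [x]) (replicate n' 0 @ r @ [y]) s) has_vector_derivative
           \<i> * (\<i> * of_real \<sigma>) ^ x * Li [1] (exp (\<i> * of_real \<sigma>)) ^ y
             * fqr (q' @ q) (replicate n' 0 @ r) \<sigma>) (at \<sigma>)"
proof -
  have "r = [] \<or> hd r \<noteq> 0" using assms(3) by (cases r) simp_all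
  then have "fqr (q' @ q) (replicate n' 0 @ r) \<sigma> = of_real (Bc q') * fqr_core (sum_list q' + n') q r \<sigma>"
    by (rule fqr_replicate_0_append[OF assms(1)])
  moreover have "fqr (q' @ q @ [x]) (replicate n' 0 @ r @ [y]) s
                 = of_real (Bc q') * fqr_core (sum_list q' + n') (q @ [x]) (r @ [y]) s" for s
    using assms(3) by (intro fqr_replicate_0_append[OF assms(1)]) simp
  ultimately show ?thesis
    using has_vector_derivative_mult_right[OF fqr_core_snoc_has_vector_derivative[OF assms(2-5)],
            of "of_real (Bc q')" "sum_list q' + n'" x]
    by (simp add: mult_ac)
qed

theorem proposition1:
  fixes q r :: "nat list" and \<sigma> :: real
  assumes "length q = length r" and "length q \<ge> 1"
    and "0 < \<sigma>" and "\<sigma> < 2 * pi"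
  shows "((\<lambda>s. fqr q r s) has_vector_derivative
           (\<i> * (\<i> * of_real \<sigma>) ^ last q * (Li [1] (exp (\<i> * of_real \<sigma>))) ^ last r
              * fqr (butlast q) (butlast r) \<sigma>)) (at \<sigma>)"
proof -
  obtain n' r'' where r: "r = replicate n' 0 @ r''" and r'': "r'' = [] \<or> hd r'' \<noteq> 0"
    by (rule replicate_0_append_cases)
  define q' q'' where "q' = take n' q" and "q'' = drop n' q"
  have q: "q = q' @ q''" and len: "length q' = n'" "length q'' = length r''"
    using assms(1) by (simp_all add: q'_def q''_def r)
  show ?thesis
  proof (cases "r'' = []")
    case True
    with len assms(2) obtain qb x where "q = qb @ [x]" "n' = Suc (length qb)"
      by (cases q rule: rev_exhaust) (auto simp: q)
    moreover from this True r have "r = replicate (length qb) 0 @ [0]"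
      by (simp add: replicate_append_same)
    ultimately show ?thesis
      using fqr_replicate_0_has_vector_derivative[of qb "length qb" x \<sigma>] by simp
  next
    case False
    with len obtain qb x rb y where "q'' = qb @ [x]" "r'' = rb @ [y]" "length qb = length rb"
      by (cases q'' rule: rev_exhaust; cases r'' rule: rev_exhaust) auto
    with q r r'' len assms(3,4) show ?thesis
      using fqr_replicate_0_append_has_vector_derivative[of q' n' qb rb y \<sigma> x]
      by (simp add: butlast_append)
  qed
qed

end
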